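(* There is a universal constant $C>0$ such that for every $m\ge0$, every $\Lambda>0$ and every $\psi\in\mathcal H$ lying in the $m$-photon sector with $\|p\psi\|<\infty$ and $(\psi,H_f\psi)<\infty$, \[ \big(\sigma\cdot E^*\psi,\,(p^2+H_f)^{-1}\,\sigma\cdot E^*\psi\big)\le \varepsilon_E\,\|\psi\|^2 + C\Lambda\big(\|p\psi\|^2+\Lambda\,(\psi,H_f\psi)\big), \] where $\varepsilon_E=\sum_{\lambda=1,2}\int_{\mathbb R^3}\frac{|H^\lambda(k)|^2}{|k|^2+|k|}\,dk$.
   Context: $p=-i\nabla_x$. Hilbert space $\mathcal H = L^2(\mathbb R^3;\mathbb C^2)\otimes\mathcal F_b(L^2(\mathbb R^3;\mathbb C^2))$ with bosonic operators $a_\lambda(k),a^*_\lambda(k)$ ($\lambda=1,2$) obeying the canonical commutation relations; the $m$-photon sector is the subspace of vectors whose Fock component is an $m$-particle state. Polarization vectors $\varepsilon_\lambda(k)\in\mathbb R^3$ with $\{k/|k|,\varepsilon_1(k),\varepsilon_2(k)\}$ orthonormal and $\varepsilon_\lambda(-k)=\pm\varepsilon_\lambda(k)$. $\chi(|k|)=1$ for $|k|\le\Lambda$, $0$ otherwise. $H^\lambda(k)=\frac{-i\chi(|k|)}{2\pi|k|^{1/2}}k\wedge\varepsilon_\lambda(k)$, $E(x)=\sum_\lambda\int H^\lambda(k)e^{ik\cdot x}a_\lambda(k)dk$ (a vector of operators) with adjoint $E^*$; $\sigma\cdot E^*=\sum_{j=1}^3\sigma_jE_j^*$ with $\sigma_j$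 the Pauli matrices acting on the spin factor $\mathbb C^2$. $H_f=\sum_\lambda\int|k|a^*_\lambda(k)a_\lambda(k)dk$. *)

theory Defs
  imports "HOL-Analysis.Analysis"
begin

text \<open>Momentum representation: the electron variable is the momentum xi (Fourier
  variable of x), so p acts as multiplication by xi. A vector in the m-photon
  sector is a function psi xi ks s, where ks i = (k_i, lambda_i) for i < m
  (photon momentum and polarization in {1,2}) and s in {0,1} is the spin index.\<close>

type_synonym photon = "(real^3) \<times> nat"
type_synonym msector = "real^3 \<Rightarrow> (nat \<Rightarrow> photon) \<Rightarrow> nat \<Rightarrow> complex"

definition photon_measure :: "photon measure" where
  "photon_measure = lborel \<Otimes>\<^sub>M count_space {1,2}"

definition photons :: "nat \<Rightarrow> (nat \<Rightarrow> photon) measure" where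
  "photons m = PiM {..<m} (\<lambda>_. photon_measure)"

definition polarization :: "(nat \<Rightarrow> real^3 \<Rightarrow> real^3) \<Rightarrow> bool" where
  "polarization eps \<longleftrightarrow>
     (\<forall>l\<in>{1,2}. eps l \<in> borel_measurable borel) \<and>
     (\<forall>k. k \<noteq> 0 \<longrightarrow>
        norm (eps 1 k) = 1 \<and> norm (eps 2 k) = 1 \<and>
        inner k (eps 1 k) = 0 \<and> inner k (eps 2 k) = 0 \<and> inner (eps 1 k) (eps 2 k) = 0) \<and>
     (\<forall>l\<in>{1,2}. \<forall>k. eps l (-k) = eps l k \<or> eps l (-k) = - eps l k)"

definition cutoff :: "real \<Rightarrow> real \<Rightarrow> real" where
  "cutoff \<Lambda> r = (if r \<le> \<Lambda> then 1 else 0)"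

definition Hvec :: "(nat \<Rightarrow> real^3 \<Rightarrow> real^3) \<Rightarrow> real \<Rightarrow> nat \<Rightarrow> real^3 \<Rightarrow> complex^3" where
  "Hvec eps \<Lambda> l k = (\<chi> j. - \<i> * complex_of_real
      (cutoff \<Lambda> (norm k) / (2 * pi * sqrt (norm k)) * (cross3 k (eps l k)) $ j))"

text \<open>Pauli matrices sigma_1, sigma_2, sigma_3 (indices of type 3: 1, 2, 3), spin indices 0,1.\<close>
definition pauli :: "3 \<Rightarrow> nat \<Rightarrow> nat \<Rightarrow> complex" where
  "pauli j s t =
     (if j = 1 then (if s \<noteq> t then 1 else 0)
      else if j = 2 then (if s = 0 \<and> t = 1 then - \<i> else if s = 1 \<and> t = 0 then \<i> else 0)
      else (if s = t then (if s = 0 then 1 else -1) else 0))"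

definition remove_at :: "nat \<Rightarrow> nat \<Rightarrow> (nat \<Rightarrow> photon) \<Rightarrow> (nat \<Rightarrow> photon)" where
  "remove_at m i ks = (\<lambda>j. if j < m then (if j < i then ks j else ks (Suc j)) else undefined)"

text \<open>Component j of E^* applied to an m-photon vector, giving an (m+1)-photon vector,
  in the momentum representation: e^{-ik.x} becomes the shift xi |-> xi + k.\<close>
definition Estar :: "(nat \<Rightarrow> real^3 \<Rightarrow> real^3) \<Rightarrow> real \<Rightarrow> nat \<Rightarrow> msector \<Rightarrow> 3 \<Rightarrow> msector" where
  "Estar eps \<Lambda> m \<psi> j xi ks s =
     complex_of_real (1 / sqrt (real (Suc m))) *
     (\<Sum>i<Suc m. cnj (Hvec eps \<Lambda> (snd (ks i)) (fst (ks i)) $ j) *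
                 \<psi> (xi + fst (ks i)) (remove_at m i ks) s)"

definition sigmaEstar :: "(nat \<Rightarrow> real^3 \<Rightarrow> real^3) \<Rightarrow> real \<Rightarrow> nat \<Rightarrow> msector \<Rightarrow> msector" where
  "sigmaEstar eps \<Lambda> m \<psi> xi ks s =
     (\<Sum>j\<in>UNIV. \<Sum>t<2. pauli j s t * Estar eps \<Lambda> m \<psi> j xi ks t)"

definition sector_vector :: "nat \<Rightarrow> msector \<Rightarrow> bool" where
  "sector_vector m \<psi> \<longleftrightarrow>
     (\<forall>s<2. (\<lambda>(xi, ks). \<psi> xi ks s) \<in> borel_measurable (lborel \<Otimes>\<^sub>M photons m)) \<and>
     (\<integral>\<^sup>+ xi. (\<integral>\<^sup>+ ks. (\<Sum>s<2. ennreal ((cmod (\<psi> xi ks s))\<^sup>2)) \<partial>photons m) \<partial>lborel) < \<infinity> \<and>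
     (\<forall>\<pi> xi ks s. \<pi> permutes {..<m} \<longrightarrow> \<psi> xi (\<lambda>i. ks (\<pi> i)) s = \<psi> xi ks s)"

definition norm_sq :: "nat \<Rightarrow> msector \<Rightarrow> ennreal" where
  "norm_sq m \<psi> = (\<integral>\<^sup>+ xi. (\<integral>\<^sup>+ ks. (\<Sum>s<2. ennreal ((cmod (\<psi> xi ks s))\<^sup>2)) \<partial>photons m) \<partial>lborel)"

definition p_norm_sq :: "nat \<Rightarrow> msector \<Rightarrow> ennreal" where
  "p_norm_sq m \<psi> = (\<integral>\<^sup>+ xi. (\<integral>\<^sup>+ ks.
      (\<Sum>s<2. ennreal ((norm xi)\<^sup>2 * (cmod (\<psi> xi ks s))\<^sup>2)) \<partial>photons m) \<partial>lborel)"

definition Hf_form :: "nat \<Rightarrow> msector \<Rightarrow> ennreal" where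
  "Hf_form m \<psi> = (\<integral>\<^sup>+ xi. (\<integral>\<^sup>+ ks.
      (\<Sum>s<2. ennreal ((\<Sum>i<m. norm (fst (ks i))) * (cmod (\<psi> xi ks s))\<^sup>2)) \<partial>photons m) \<partial>lborel)"

definition resolvent_form :: "nat \<Rightarrow> msector \<Rightarrow> ennreal" where
  "resolvent_form n \<phi> = (\<integral>\<^sup>+ xi. (\<integral>\<^sup>+ ks.
      (\<Sum>s<2. ennreal ((cmod (\<phi> xi ks s))\<^sup>2 / ((norm xi)\<^sup>2 + (\<Sum>i<n. norm (fst (ks i))))))
      \<partial>photons n) \<partial>lborel)"

definition epsE :: "(nat \<Rightarrow> real^3 \<Rightarrow> real^3) \<Rightarrow> real \<Rightarrow> ennreal" where
  "epsE eps \<Lambda> = (\<Sum>l\<in>{1,2}. \<integral>\<^sup>+ k. ennreal ((norm (Hvec eps \<Lambda> l k))\<^sup>2 / ((norm k)\<^sup>2 + norm k)) \<partial>lborel)"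

end

theory Submission
  imports Defs
begin

text \<open>In momentum space, \<open>\<sigma> \<cdot> E\<^sup>* \<psi>\<close> at \<open>(\<xi>, k\<^sub>1, ..., k\<^sub>m\<^sub>+\<^sub>1)\<close> is \<open>(m + 1)\<^sup>-\<^sup>1\<^sup>/\<^sup>2\<close>
  times a sum over the emitted photon \<open>i\<close> of spinors of norm \<open>|H(k\<^sub>i)| |\<psi>(\<xi> + k\<^sub>i, K\<^sub>i)|\<close>,
  where \<open>K\<^sub>i\<close> are the other photons (for real \<open>v\<close>, \<open>(\<sigma> \<cdot> v)\<^sup>2 = |v|\<^sup>2\<close>). A weighted
  Cauchy--Schwarz inequality bounds the resolvent density pointwise by
  \<open>(m + 1)\<^sup>-\<^sup>1 \<Sum>\<^sub>i |H(k\<^sub>i)|\<^sup>2 |\<psi>(\<xi> + k\<^sub>i, K\<^sub>i)|\<^sup>2 (1 / (\<xi>\<^sup>2 + |k\<^sub>i|) + H\<^sub>f(K\<^sub>i) / |k\<^sub>i|\<^sup>2)\<close>.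
  The \<open>m + 1\<close> terms have equal integrals by permutation invariance of the photon measure, and
  after the shift \<open>\<eta> = \<xi> + k\<close> the emitted photon \<open>k\<close> is integrated out for fixed \<open>(\<eta>, K)\<close>.
  Averaging \<open>k\<close> with \<open>-k\<close> gives
  \<open>1 / (|\<eta> - k|\<^sup>2 + |k|) + 1 / (|\<eta> + k|\<^sup>2 + |k|) \<le> 2 / (|k|\<^sup>2 + |k|) + 8 |\<eta>|\<^sup>2 |k| / (|k|\<^sup>2 + |k|)\<^sup>2\<close>;
  the first term produces \<open>\<epsilon>\<^sub>E\<close>, while the second one and \<open>H\<^sub>f(K) / |k|\<^sup>2\<close> are controlled
  by the dyadic estimate: the integral of \<open>|k|\<^sup>-\<^sup>2\<close> over \<open>|k| \<le> \<Lambda>\<close> is at most \<open>8 |B\<^sub>1| \<Lambda>\<close>.\<close>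

section \<open>Elementary inequalities\<close>

lemma L2_set_sum_le:
  fixes a :: "'i \<Rightarrow> 's \<Rightarrow> 'b::real_normed_vector"
  assumes "finite I"
  shows "L2_set (\<lambda>s. norm (\<Sum>i\<in>I. a i s)) S \<le> (\<Sum>i\<in>I. L2_set (\<lambda>s. norm (a i s)) S)"
  using assms
proof (induction I rule: finite_induct)
  case empty
  then show ?case by (simp add: L2_set_def)
next
  case (insert x F)
  have "L2_set (\<lambda>s. norm (\<Sum>i\<in>insert x F. a i s)) S = L2_set (\<lambda>s. norm (a x s + (\<Sum>i\<in>F. a i s))) S"
    using insert by simp
  also have "\<dots> \<le> L2_set (\<lambda>s. norm (a x s) + norm (\<Sum>i\<in>F. a i s)) S"
    by (rule L2_set_mono) (auto intro: norm_triangle_ineq)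
  also have "\<dots> \<le> L2_set (\<lambda>s. norm (a x s)) S + L2_set (\<lambda>s. norm (\<Sum>i\<in>F. a i s)) S"
    by (rule L2_set_triangle_ineq)
  also have "\<dots> \<le> L2_set (\<lambda>s. norm (a x s)) S + (\<Sum>i\<in>F. L2_set (\<lambda>s. norm (a i s)) S)"
    using insert.IH by simp
  finally show ?case using insert by simp
qed

lemma sum_offdiag_swap:
  fixes f :: "'a \<Rightarrow> 'a \<Rightarrow> 'b::comm_monoid_add"
  assumes "finite I"
  shows "(\<Sum>i\<in>I. \<Sum>j\<in>I-{i}. f j i) = (\<Sum>i\<in>I. \<Sum>j\<in>I-{i}. f i j)"
proof -
  have "I - {i} = {j. j \<in> I \<and> i \<noteq> j}" "I - {i} = {j. j \<in> I \<and> j \<noteq> i}" for i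
    by auto
  then show ?thesis
    using sum.swap_restrict[OF assms assms, of "\<lambda>i j. f j i" "\<lambda>i j. i \<noteq> j"] by simp
qed

lemma mult_div_le_weighted_squares:
  fixes a b r s D :: real
  assumes "a \<ge> 0" "b \<ge> 0" "r \<ge> 0" "s \<ge> 0" "r = 0 \<longrightarrow> a = 0" "s = 0 \<longrightarrow> b = 0"
    and "r \<le> D" "s \<le> D"
  shows "a * b / D \<le> (a\<^sup>2 * s / r\<^sup>2 + b\<^sup>2 * r / s\<^sup>2) / 2"
proof (cases "r = 0 \<or> s = 0")
  case True
  then have "a * b / D = 0" using assms by auto
  moreover have "0 \<le> (a\<^sup>2 * s / r\<^sup>2 + b\<^sup>2 * r / s\<^sup>2) / 2" using assms by simp
  ultimately show ?thesis by linarith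
next
  case False
  then have r: "r > 0" and s: "s > 0" using assms by auto
  have D: "D > 0" using r assms by simp
  have amgm: "2 * a * b \<le> a\<^sup>2 * s / r + b\<^sup>2 * r / s"
  proof -
    have "0 \<le> (a * s - b * r)\<^sup>2" by simp
    then have "2 * a * b * (r * s) \<le> a\<^sup>2 * s\<^sup>2 + b\<^sup>2 * r\<^sup>2"
      by (simp add: power2_eq_square algebra_simps)
    then show ?thesis using r s by (simp add: field_simps power2_eq_square)
  qed
  have "a * b / D \<le> (a\<^sup>2 * s / r + b\<^sup>2 * r / s) / 2 / D"
    using amgm D by (intro divide_right_mono) auto
  also have "\<dots> = (a\<^sup>2 * s / (r * D) + b\<^sup>2 * r / (s * D)) / 2"
    using r s D by (simp add: field_simps)
  also have "\<dots> \<le> (a\<^sup>2 * s / r\<^sup>2 + b\<^sup>2 * r / s\<^sup>2) / 2"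
  proof -
    have "a\<^sup>2 * s / (r * D) \<le> a\<^sup>2 * s / (r * r)" "b\<^sup>2 * r / (s * D) \<le> b\<^sup>2 * r / (s * s)"
      using r s assms by (intro divide_left_mono mult_left_mono; simp)+
    then show ?thesis by (intro divide_right_mono add_mono) (simp_all add: power2_eq_square)
  qed
  finally show ?thesis .
qed

text \<open>A weighted Cauchy--Schwarz inequality: the cross terms \<open>a\<^sub>i a\<^sub>j / D\<close> are
  estimated by AM--GM with weights \<open>r\<^sub>j / r\<^sub>i\<close>.\<close>

lemma square_sum_div_le:
  fixes a r :: "'i \<Rightarrow> real" and x :: real
  assumes fin: "finite I" and x: "x \<ge> 0"
    and a: "\<And>i. i \<in> I \<Longrightarrow> a i \<ge> 0" and r: "\<And>i. i \<in> I \<Longrightarrow> r i \<ge> 0"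
    and zero: "\<And>i. i \<in> I \<Longrightarrow> r i = 0 \<Longrightarrow> a i = 0"
  shows "(\<Sum>i\<in>I. a i)\<^sup>2 / (x + (\<Sum>i\<in>I. r i))
    \<le> (\<Sum>i\<in>I. (a i)\<^sup>2 * (1 / (x + r i) + (\<Sum>j\<in>I-{i}. r j) / (r i)\<^sup>2))"
proof -
  define D where "D = x + (\<Sum>i\<in>I. r i)"
  define A where "A i j = (a i)\<^sup>2 * r j / (r i)\<^sup>2" for i j
  have D_ge: "x + r i \<le> D" if "i \<in> I" for i
    unfolding D_def using fin r that by (auto intro: member_le_sum)
  have r_le_D: "r i \<le> D" if "i \<in> I" for i
    using D_ge[OF that] x by linarith
  have diag: "(a i)\<^sup>2 / D \<le> (a i)\<^sup>2 / (x + r i)" if i: "i \<in> I" for i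
  proof (cases "x + r i = 0")
    case True
    then show ?thesis using x r[OF i] zero[OF i] by simp
  next
    case False
    then show ?thesis using x r[OF i] D_ge[OF i] by (intro divide_left_mono) auto
  qed
  have offdiag: "(\<Sum>i\<in>I. \<Sum>j\<in>I-{i}. a i * a j / D) \<le> (\<Sum>i\<in>I. \<Sum>j\<in>I-{i}. A i j)"
  proof -
    have "(\<Sum>i\<in>I. \<Sum>j\<in>I-{i}. a i * a j / D) \<le> (\<Sum>i\<in>I. \<Sum>j\<in>I-{i}. (A i j + A j i) / 2)"
    proof (intro sum_mono)
      fix i j assume i: "i \<in> I" and j: "j \<in> I - {i}"
      then have "j \<in> I" by simp
      with i show "a i * a j / D \<le> (A i j + A j i) / 2"
        unfolding A_def
        by (intro mult_div_le_weighted_squares a r r_le_D impI zero) simp_all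
    qed
    also have "\<dots> = ((\<Sum>i\<in>I. \<Sum>j\<in>I-{i}. A i j) + (\<Sum>i\<in>I. \<Sum>j\<in>I-{i}. A j i)) / 2"
      by (simp add: sum.distrib sum_divide_distrib add_divide_distrib)
    also have "\<dots> = (\<Sum>i\<in>I. \<Sum>j\<in>I-{i}. A i j)"
      unfolding sum_offdiag_swap[OF fin, of A] by simp
    finally show ?thesis .
  qed
  have "(\<Sum>i\<in>I. a i)\<^sup>2 / D = (\<Sum>i\<in>I. (a i)\<^sup>2 / D + (\<Sum>j\<in>I-{i}. a i * a j / D))"
  proof -
    have "(\<Sum>i\<in>I. a i)\<^sup>2 / D = (\<Sum>i\<in>I. \<Sum>j\<in>I. a i * a j / D)"
      by (simp add: power2_eq_square sum_product sum_divide_distrib)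
    also have "\<dots> = (\<Sum>i\<in>I. (a i)\<^sup>2 / D + (\<Sum>j\<in>I-{i}. a i * a j / D))"
      using fin by (intro sum.cong refl) (subst sum.remove; simp add: power2_eq_square)
    finally show ?thesis .
  qed
  also have "\<dots> \<le> (\<Sum>i\<in>I. (a i)\<^sup>2 / (x + r i)) + (\<Sum>i\<in>I. \<Sum>j\<in>I-{i}. A i j)"
    unfolding sum.distrib by (rule add_mono[OF sum_mono[OF diag] offdiag])
  also have "\<dots> = (\<Sum>i\<in>I. (a i)\<^sup>2 * (1 / (x + r i) + (\<Sum>j\<in>I-{i}. r j) / (r i)\<^sup>2))"
    by (simp add: A_def sum.distrib distrib_left sum_distrib_left sum_divide_distrib)
  finally show ?thesis unfolding D_def .
qed

lemma inverse_conj_sum_le: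
  fixes a b q r e :: real
  assumes r: "r > 0" and q: "q \<ge> r" and e: "e \<ge> 0" and a: "a = q + e"
    and minus: "a - b \<ge> r" and plus: "a + b \<ge> r" and b: "b\<^sup>2 \<le> 4 * e * r\<^sup>2"
    and prod: "(a - b) * (a + b) \<ge> r * q"
  shows "1 / (a - b) + 1 / (a + b) \<le> 2 / q + 8 * e * r / q\<^sup>2"
proof -
  define P where "P = (a - b) * (a + b)"
  have P_pos: "P > 0" using prod r q unfolding P_def by (smt (verit) mult_pos_pos)
  have q_pos: "q > 0" using r q by simp
  have lhs: "1 / (a - b) + 1 / (a + b) = 2 * a / P"
    using minus plus r unfolding P_def by (simp add: field_simps)
  have "2 * a * q\<^sup>2 - 2 * q * P = 2 * q * (b\<^sup>2 - a * e)"
    unfolding P_def a by (simp add: power2_eq_square algebra_simps)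
  also have "\<dots> \<le> 2 * q * (4 * e * r\<^sup>2)"
  proof -
    have "a * e \<ge> 0" using a q r e by simp
    then show ?thesis using b q_pos by (intro mult_left_mono) auto
  qed
  also have "\<dots> = 8 * e * r * (r * q)" by (simp add: power2_eq_square)
  also have "\<dots> \<le> 8 * e * r * P"
    using prod e r unfolding P_def by (intro mult_left_mono) auto
  finally have "2 * a * q\<^sup>2 \<le> 2 * q * P + 8 * e * r * P" by simp
  then have "2 * a / P \<le> (2 * q * P + 8 * e * r * P) / (P * q\<^sup>2)"
    using P_pos q_pos by (simp add: field_simps)
  also have "\<dots> = 2 / q + 8 * e * r / q\<^sup>2"
    using P_pos q_pos by (simp add: field_simps power2_eq_square)
  finally show ?thesis using lhs by simp
qed

lemma inverse_reflected_sum_le: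
  fixes k \<eta> :: "'a::real_inner"
  assumes "k \<noteq> 0"
  shows "1 / ((norm (\<eta> - k))\<^sup>2 + norm k) + 1 / ((norm (\<eta> + k))\<^sup>2 + norm k)
     \<le> 2 / ((norm k)\<^sup>2 + norm k) + 8 * (norm \<eta>)\<^sup>2 * norm k / ((norm k)\<^sup>2 + norm k)\<^sup>2"
proof -
  define r where "r = norm k"
  define e where "e = (norm \<eta>)\<^sup>2"
  define q where "q = r\<^sup>2 + r"
  define a where "a = q + e"
  define b where "b = 2 * inner \<eta> k"
  have r: "r > 0" using assms by (simp add: r_def)
  have minus_eq: "(norm (\<eta> - k))\<^sup>2 + norm k = a - b"
    unfolding a_def b_def q_def e_def r_def
    by (simp add: power2_norm_eq_inner inner_diff_left inner_diff_right inner_commute)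
  have plus_eq: "(norm (\<eta> + k))\<^sup>2 + norm k = a + b"
    unfolding a_def b_def q_def e_def r_def
    by (simp add: power2_norm_eq_inner inner_add_left inner_add_right inner_commute)
  have minus: "a - b \<ge> r" and plus: "a + b \<ge> r"
    unfolding minus_eq[symmetric] plus_eq[symmetric] r_def by simp_all
  have b: "b\<^sup>2 \<le> 4 * e * r\<^sup>2"
  proof -
    have "(inner \<eta> k)\<^sup>2 \<le> (norm \<eta> * norm k)\<^sup>2"
      using Cauchy_Schwarz_ineq2[of \<eta> k] by (metis abs_ge_zero power2_abs power_mono)
    then show ?thesis unfolding b_def e_def r_def by (simp add: power_mult_distrib)
  qed
  have q: "q \<ge> r" and e: "e \<ge> 0" unfolding q_def e_def by simp_all
  have prod: "(a - b) * (a + b) \<ge> r * q"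
  proof (cases "b \<ge> 0")
    case True
    then have "a + b \<ge> q" using e unfolding a_def by simp
    then show ?thesis using minus r q by (metis mult_mono less_imp_le order_trans)
  next
    case False
    then have "a - b \<ge> q" using e unfolding a_def by simp
    then have "(a - b) * (a + b) \<ge> q * r"
      using plus r q by (metis mult_mono less_imp_le order_trans)
    then show ?thesis by (simp add: mult.commute)
  qed
  have "1 / (a - b) + 1 / (a + b) \<le> 2 / q + 8 * e * r / q\<^sup>2"
    by (rule inverse_conj_sum_le[OF r q e _ minus plus b prod]) (simp add: a_def)
  then show ?thesis unfolding minus_eq plus_eq q_def e_def r_def by simp
qed

section \<open>Pauli matrices and the coupling function\<close>

lemma pauli_spinor_norm_sq:
  fixes v :: "real^3" and p :: "nat \<Rightarrow> complex"
  shows "(\<Sum>s<2. (cmod (\<Sum>j\<in>UNIV. \<Sum>t<2. pauli j s t * of_real (v $ j) * p t))\<^sup>2)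
       = (norm v)\<^sup>2 * (\<Sum>t<2. (cmod (p t))\<^sup>2)"
proof -
  have two: "(\<Sum>t<(2::nat). f t) = f 0 + f 1" for f :: "nat \<Rightarrow> 'b::comm_monoid_add"
    by (simp add: numeral_2_eq_2)
  have ne: "(3::3) \<noteq> 1" "(3::3) \<noteq> 2" by simp_all
  obtain a b c d where ab: "p 0 = Complex a b" and cd: "p 1 = Complex c d"
    by (metis complex.exhaust_sel)
  define v1 v2 v3 where "v1 = v$1" and "v2 = v$2" and "v3 = v$3"
  have "(\<Sum>s<2. (cmod (\<Sum>j\<in>UNIV. \<Sum>t<2. pauli j s t * of_real (v $ j) * p t))\<^sup>2)
      = (cmod (v1 * Complex c d - \<i> * v2 * Complex c d + v3 * Complex a b))\<^sup>2
        + (cmod (v1 * Complex a b + \<i> * v2 * Complex a b - v3 * Complex c d))\<^sup>2"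
    unfolding two sum_3 by (simp add: pauli_def ne ab cd[simplified] v1_def v2_def v3_def)
  also have "\<dots> = (v1 * c + v2 * d + v3 * a)\<^sup>2 + (v1 * d - v2 * c + v3 * b)\<^sup>2
        + (v1 * a - v2 * b - v3 * c)\<^sup>2 + (v1 * b + v2 * a - v3 * d)\<^sup>2"
    by (simp add: cmod_power2 Complex_eq)
  also have "\<dots> = (v1\<^sup>2 + v2\<^sup>2 + v3\<^sup>2) * ((a\<^sup>2 + b\<^sup>2) + (c\<^sup>2 + d\<^sup>2))"
    by (simp add: power2_eq_square algebra_simps)
  also have "\<dots> = (norm v)\<^sup>2 * (\<Sum>t<2. (cmod (p t))\<^sup>2)"
    unfolding two ab cd v1_def v2_def v3_def
    by (simp add: cmod_power2 norm_vec_def L2_set_def sum_3)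
  finally show ?thesis .
qed

definition Hreal :: "(nat \<Rightarrow> real^3 \<Rightarrow> real^3) \<Rightarrow> real \<Rightarrow> nat \<Rightarrow> real^3 \<Rightarrow> real^3" where
  "Hreal eps \<Lambda> l k = (cutoff \<Lambda> (norm k) / (2 * pi * sqrt (norm k))) *\<^sub>R cross3 k (eps l k)"

lemma Hvec_nth_eq: "Hvec eps \<Lambda> l k $ j = - \<i> * of_real (Hreal eps \<Lambda> l k $ j)"
  by (simp add: Hvec_def Hreal_def)

lemma norm_Hvec_eq: "norm (Hvec eps \<Lambda> l k) = norm (Hreal eps \<Lambda> l k)"
  by (simp add: norm_vec_def Hvec_nth_eq norm_mult)

lemma Hvec_zero [simp]: "Hvec eps \<Lambda> l 0 = 0"
  by (simp add: vec_eq_iff Hvec_nth_eq Hreal_def)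

lemma pauli_Hvec_spinor_norm_sq:
  "(\<Sum>s<2. (cmod (\<Sum>j\<in>UNIV. \<Sum>t<2. pauli j s t * cnj (Hvec eps \<Lambda> l k $ j) * p t))\<^sup>2)
     = (norm (Hvec eps \<Lambda> l k))\<^sup>2 * (\<Sum>t<2. (cmod (p t))\<^sup>2)"
proof -
  have "(\<Sum>j\<in>UNIV. \<Sum>t<2. pauli j s t * cnj (Hvec eps \<Lambda> l k $ j) * p t)
      = \<i> * (\<Sum>j\<in>UNIV. \<Sum>t<2. pauli j s t * of_real (Hreal eps \<Lambda> l k $ j) * p t)" for s
    by (simp add: Hvec_nth_eq sum_distrib_left mult_ac)
  then show ?thesis
    using pauli_spinor_norm_sq[of "Hreal eps \<Lambda> l k" p] by (simp add: norm_mult norm_Hvec_eq)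
qed

definition coupling_sq :: "real \<Rightarrow> real^3 \<Rightarrow> real" where
  "coupling_sq \<Lambda> k = (if norm k \<le> \<Lambda> then norm k / (4 * pi\<^sup>2) else 0)"

lemma coupling_sq_nonneg: "coupling_sq \<Lambda> k \<ge> 0"
  by (simp add: coupling_sq_def)

lemma measurable_coupling_sq [measurable]: "coupling_sq \<Lambda> \<in> borel_measurable borel"
  unfolding coupling_sq_def by measurable

lemma coupling_sq_minus [simp]: "coupling_sq \<Lambda> (- k) = coupling_sq \<Lambda> k"
  by (simp add: coupling_sq_def)

lemma norm_Hvec_sq:
  assumes "polarization eps" and "l \<in> {1, 2}"
  shows "(norm (Hvec eps \<Lambda> l k))\<^sup>2 = coupling_sq \<Lambda> k"
proof (cases "k = 0")
  case True
  then show ?thesis by (simp add: coupling_sq_def)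
next
  case False
  then have "norm (eps l k) = 1" "inner k (eps l k) = 0"
    using assms unfolding polarization_def by auto
  then have "norm (cross3 k (eps l k)) = norm k"
    using norm_cross[of k "eps l k"] by (simp add: power2_eq_iff_nonneg)
  then have "(norm (Hvec eps \<Lambda> l k))\<^sup>2
      = (cutoff \<Lambda> (norm k) / (2 * pi * sqrt (norm k)))\<^sup>2 * (norm k)\<^sup>2"
    by (simp add: norm_Hvec_eq Hreal_def power_mult_distrib power_divide)
  then show ?thesis
    using False
    by (simp add: coupling_sq_def cutoff_def power_divide power_mult_distrib
        power2_eq_square[of "norm k"])
qed

lemma epsE_eq:
  assumes "polarization eps"
  shows "epsE eps \<Lambda> = 2 * (\<integral>\<^sup>+k. ennreal (coupling_sq \<Lambda> k / ((norm k)\<^sup>2 + norm k)) \<partial>lborel)"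
  using norm_Hvec_sq[OF assms] by (simp add: epsE_def mult_2)

section \<open>Integrals over the photon momentum\<close>

lemma nn_integral_reflect:
  fixes f :: "'a::euclidean_space \<Rightarrow> ennreal"
  assumes [measurable]: "f \<in> borel_measurable borel"
  shows "(\<integral>\<^sup>+k. f k \<partial>lborel) = (\<integral>\<^sup>+k. f (- k) \<partial>lborel)"
proof -
  have "(lborel :: 'a measure) = distr lborel borel uminus"
    using lborel_affine[of "-1" "0::'a"] by (simp add: density_1)
  then have "(\<integral>\<^sup>+k. f k \<partial>lborel) = (\<integral>\<^sup>+k. f k \<partial>distr lborel borel uminus)"
    by simp
  also have "\<dots> = (\<integral>\<^sup>+k. f (- k) \<partial>lborel)"
    by (subst nn_integral_distr) auto
  finally show ?thesis .
qed

lemma dyadic_scale_exists: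
  fixes L r :: real
  assumes r: "0 < r" "r \<le> L"
  shows "\<exists>j::nat. r \<le> L / 2^j \<and> L / 2^(Suc j) < r"
proof -
  have L: "L > 0" using r by simp
  obtain n :: nat where n: "L / r < real n" using reals_Archimedean2 by blast
  have "real n < (2::real) ^ n" by (rule of_nat_less_two_power)
  moreover have "(0::real) \<le> 2 ^ n" by simp
  ultimately have "real n < 2 * 2 ^ n" by linarith
  with n have "L / r < 2^(Suc n)" by simp
  then have ex: "L / 2^(Suc n) < r" using r L by (simp add: field_simps)
  define j where "j = (LEAST j. L / 2^(Suc j) < r)"
  have jP: "L / 2^(Suc j) < r" unfolding j_def by (rule LeastI[of "\<lambda>j. L / 2^(Suc j) < r", OF ex])
  have "r \<le> L / 2^j"
  proof (cases j)
    case 0 then show ?thesis using r by simp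
  next
    case (Suc j')
    have "\<not> L / 2^(Suc j') < r"
      using not_less_Least[of j' "\<lambda>j. L / 2^(Suc j) < r"] Suc unfolding j_def by simp
    then show ?thesis using Suc by simp
  qed
  with jP show ?thesis by blast
qed

lemma inverse_square_le_dyadic_sum:
  fixes k :: "'a::real_normed_vector"
  assumes L: "L > 0"
  shows "ennreal (indicator (cball 0 L) k / (norm k)\<^sup>2)
    \<le> (\<Sum>j. ennreal (4^(Suc j) / L\<^sup>2) * indicator (cball 0 (L / 2^j)) k)"
proof (cases "k = 0 \<or> norm k > L")
  case True
  then show ?thesis by (auto simp: indicator_def)
next
  case False
  then have k: "0 < norm k" "norm k \<le> L" by auto
  obtain j :: nat where j: "norm k \<le> L / 2^j" "L / 2^(Suc j) < norm k"
    using dyadic_scale_exists[OF k] by blast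
  have inv: "1 / (norm k)\<^sup>2 \<le> 4^(Suc j) / L\<^sup>2"
  proof -
    have "L < 2^(Suc j) * norm k" using j(2) by (simp add: field_simps)
    then have "L\<^sup>2 \<le> (2^(Suc j) * norm k)\<^sup>2" using L by (intro power_mono) auto
    also have "\<dots> = 4^(Suc j) * (norm k)\<^sup>2"
      by (simp add: power_mult_distrib power2_eq_square flip: power_mult_distrib)
    finally show ?thesis using k L by (simp add: field_simps)
  qed
  define f where "f j = ennreal (4^(Suc j) / L\<^sup>2) * indicator (cball 0 (L / 2^j)) k" for j
  have "ennreal (indicator (cball 0 L) k / (norm k)\<^sup>2) \<le> f j"
    using k j inv by (simp add: f_def indicator_def)
  also have "\<dots> \<le> (\<Sum>j. f j)"
    using sum_le_suminf[OF summableI, of "{j}" f] by simp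
  finally show ?thesis unfolding f_def .
qed

lemma nn_integral_inverse_square_cball_le:
  fixes L :: real
  assumes L: "L > 0"
  shows "(\<integral>\<^sup>+k. ennreal (indicator (cball (0::real^3) L) k / (norm k)\<^sup>2) \<partial>lborel)
          \<le> ennreal (8 * unit_ball_vol 3 * L)"
proof -
  define V where "V = unit_ball_vol 3"
  have V: "V > 0" unfolding V_def by simp
  define g where "g j k = ennreal (4^(Suc j) / L\<^sup>2) * indicator (cball (0::real^3) (L / 2^j)) k"
    for j :: nat and k
  have pt: "ennreal (indicator (cball (0::real^3) L) k / (norm k)\<^sup>2) \<le> (\<Sum>j. g j k)" for k
    unfolding g_def by (rule inverse_square_le_dyadic_sum[OF L])
  have "(\<integral>\<^sup>+k. ennreal (indicator (cball (0::real^3) L) k / (norm k)\<^sup>2) \<partial>lborel)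
      \<le> (\<integral>\<^sup>+k. (\<Sum>j. g j k) \<partial>lborel)"
    by (intro nn_integral_mono pt)
  also have "\<dots> = (\<Sum>j. \<integral>\<^sup>+k. g j k \<partial>lborel)"
    by (rule nn_integral_suminf)
      (auto simp: g_def intro!: borel_measurable_times_ennreal borel_measurable_indicator)
  also have "\<dots> = (\<Sum>j. ennreal (4 * V * L * (1/2)^j))"
  proof (rule suminf_cong)
    fix j :: nat
    have "(\<integral>\<^sup>+k. g j k \<partial>lborel)
        = ennreal (4^(Suc j) / L\<^sup>2) * emeasure lborel (cball (0::real^3) (L / 2^j))"
      unfolding g_def by (rule nn_integral_cmult_indicator) simp
    also have "\<dots> = ennreal (4^(Suc j) / L\<^sup>2) * ennreal (V * (L / 2^j)^3)"
      using L by (subst emeasure_cball) (simp_all add: V_def)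
    also have "\<dots> = ennreal (4 * V * L * (1/2)^j)"
    proof -
      have e: "(4::real)^j = (2^j)^2" by (simp add: power2_eq_square flip: power_mult_distrib)
      have "4^(Suc j) / L\<^sup>2 * (V * (L / 2^j)^3) = 4 * V * L * (1/2)^j"
        using L by (simp add: e field_simps power_divide) (simp add: power2_eq_square power3_eq_cube)
      then show ?thesis using L V by (subst ennreal_mult[symmetric]) auto
    qed
    finally show "(\<integral>\<^sup>+k. g j k \<partial>lborel) = ennreal (4 * V * L * (1/2)^j)" .
  qed
  also have "\<dots> = ennreal (8 * V * L)"
  proof -
    have "(\<lambda>j. 4 * V * L * (1/2::real)^j) sums (4 * V * L * (1 / (1 - 1/2)))"
      by (intro sums_mult geometric_sums) simp
    then have sm: "(\<lambda>j. 4 * V * L * (1/2::real)^j) sums (8 * V * L)" by (simp add: mult.assoc)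
    then show ?thesis using V L by (subst suminf_ennreal2) (auto simp: sums_iff)
  qed
  finally show ?thesis by (simp add: V_def)
qed


lemma nn_integral_le_by_reflection:
  fixes f g :: "'a::euclidean_space \<Rightarrow> ennreal"
  assumes [measurable]: "f \<in> borel_measurable borel" "g \<in> borel_measurable borel"
    and le: "\<And>k. f k + f (- k) \<le> 2 * g k"
  shows "(\<integral>\<^sup>+k. f k \<partial>lborel) \<le> (\<integral>\<^sup>+k. g k \<partial>lborel)"
proof -
  have "2 * (\<integral>\<^sup>+k. f k \<partial>lborel) = (\<integral>\<^sup>+k. f k \<partial>lborel) + (\<integral>\<^sup>+k. f (- k) \<partial>lborel)"
    by (simp add: mult_2 nn_integral_reflect[of f, symmetric])
  also have "\<dots> = (\<integral>\<^sup>+k. f k + f (- k) \<partial>lborel)"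
    by (rule nn_integral_add[symmetric]) auto
  also have "\<dots> \<le> (\<integral>\<^sup>+k. 2 * g k \<partial>lborel)"
    by (intro nn_integral_mono le)
  also have "\<dots> = 2 * (\<integral>\<^sup>+k. g k \<partial>lborel)"
    by (rule nn_integral_cmult) auto
  finally show ?thesis
    by (subst (asm) ennreal_mult_le_mult_iff) auto
qed

lemma coupling_reflected_resolvent_le:
  fixes k \<eta> :: "real^3"
  shows "coupling_sq \<Lambda> k / ((norm (\<eta> - k))\<^sup>2 + norm k)
           + coupling_sq \<Lambda> k / ((norm (\<eta> + k))\<^sup>2 + norm k)
    \<le> 2 * (coupling_sq \<Lambda> k / ((norm k)\<^sup>2 + norm k)
           + (norm \<eta>)\<^sup>2 / pi\<^sup>2 * (indicator (cball 0 \<Lambda>) k / (norm k)\<^sup>2))"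
proof (cases "k = 0 \<or> norm k > \<Lambda>")
  case True
  then show ?thesis by (auto simp: coupling_sq_def indicator_def)
next
  case False
  then have k: "k \<noteq> 0" "norm k \<le> \<Lambda>" by auto
  define r where "r = norm k"
  define q where "q = r\<^sup>2 + r"
  define e where "e = (norm \<eta>)\<^sup>2"
  have r: "r > 0" using k by (simp add: r_def)
  have h: "coupling_sq \<Lambda> k = r / (4 * pi\<^sup>2)" using k by (simp add: coupling_sq_def r_def)
  have "coupling_sq \<Lambda> k / ((norm (\<eta> - k))\<^sup>2 + norm k)
          + coupling_sq \<Lambda> k / ((norm (\<eta> + k))\<^sup>2 + norm k)
      = coupling_sq \<Lambda> k * (1 / ((norm (\<eta> - k))\<^sup>2 + norm k) + 1 / ((norm (\<eta> + k))\<^sup>2 + norm k))"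
    by (simp add: field_simps)
  also have "\<dots> \<le> coupling_sq \<Lambda> k * (2 / q + 8 * e * r / q\<^sup>2)"
    using inverse_reflected_sum_le[OF k(1), of \<eta>] coupling_sq_nonneg
    unfolding q_def e_def r_def by (intro mult_left_mono) auto
  also have "\<dots> = 2 * (coupling_sq \<Lambda> k / q) + 2 * (e / pi\<^sup>2 * (r\<^sup>2 / q\<^sup>2))"
    unfolding h by (simp add: field_simps power2_eq_square)
  also have "\<dots> \<le> 2 * (coupling_sq \<Lambda> k / q) + 2 * (e / pi\<^sup>2 * (1 / r\<^sup>2))"
  proof -
    have "r\<^sup>2 * r\<^sup>2 \<le> q\<^sup>2"
      unfolding q_def using r by (simp add: power2_eq_square algebra_simps mult_mono)
    moreover have "r\<^sup>2 * r\<^sup>2 > 0" using r by simp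
    ultimately have "r\<^sup>2 / q\<^sup>2 \<le> r\<^sup>2 / (r\<^sup>2 * r\<^sup>2)"
      by (intro frac_le) auto
    also have "\<dots> = 1 / r\<^sup>2"
      using r by (metis nonzero_divide_mult_cancel_left power_not_zero less_irrefl)
    finally have "e / pi\<^sup>2 * (r\<^sup>2 / q\<^sup>2) \<le> e / pi\<^sup>2 * (1 / r\<^sup>2)"
      by (rule mult_left_mono) (simp add: e_def)
    then show ?thesis by simp
  qed
  also have "\<dots> = 2 * (coupling_sq \<Lambda> k / ((norm k)\<^sup>2 + norm k)
           + (norm \<eta>)\<^sup>2 / pi\<^sup>2 * (indicator (cball 0 \<Lambda>) k / (norm k)\<^sup>2))"
    using k by (simp add: indicator_def q_def e_def r_def distrib_left)
  finally show ?thesis .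
qed

lemma nn_integral_coupling_shifted_resolvent_le:
  assumes L: "\<Lambda> > 0"
  shows "(\<integral>\<^sup>+k. ennreal (coupling_sq \<Lambda> k / ((norm (\<eta> - k))\<^sup>2 + norm k)) \<partial>lborel)
     \<le> (\<integral>\<^sup>+k. ennreal (coupling_sq \<Lambda> k / ((norm k)\<^sup>2 + norm k)) \<partial>lborel)
        + ennreal (8 * unit_ball_vol 3 / pi\<^sup>2 * \<Lambda> * (norm \<eta>)\<^sup>2)"
proof -
  define c where "c = (norm \<eta>)\<^sup>2 / pi\<^sup>2"
  have c: "c \<ge> 0" unfolding c_def by simp
  have [measurable]: "cball (0::real^3) \<Lambda> \<in> sets borel" by simp
  define w where "w k = indicator (cball 0 \<Lambda>) k / (norm k)\<^sup>2" for k :: "real^3"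
  have [measurable]: "w \<in> borel_measurable borel"
    unfolding w_def by measurable
  have "(\<integral>\<^sup>+k. ennreal (coupling_sq \<Lambda> k / ((norm (\<eta> - k))\<^sup>2 + norm k)) \<partial>lborel)
      \<le> (\<integral>\<^sup>+k. ennreal (coupling_sq \<Lambda> k / ((norm k)\<^sup>2 + norm k)) + ennreal c * ennreal (w k) \<partial>lborel)"
  proof (rule nn_integral_le_by_reflection)
    fix k :: "real^3"
    define a where "a = coupling_sq \<Lambda> k / ((norm k)\<^sup>2 + norm k)"
    have a: "a \<ge> 0" and w: "w k \<ge> 0"
      using coupling_sq_nonneg[of \<Lambda> k] by (simp_all add: a_def w_def)
    have "ennreal (coupling_sq \<Lambda> k / ((norm (\<eta> - k))\<^sup>2 + norm k))
          + ennreal (coupling_sq \<Lambda> k / ((norm (\<eta> + k))\<^sup>2 + norm k))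
        = ennreal (coupling_sq \<Lambda> k / ((norm (\<eta> - k))\<^sup>2 + norm k)
          + coupling_sq \<Lambda> k / ((norm (\<eta> + k))\<^sup>2 + norm k))"
      using coupling_sq_nonneg[of \<Lambda> k] by (intro ennreal_plus[symmetric]) auto
    also have "\<dots> \<le> ennreal (2 * (a + c * w k))"
      using coupling_reflected_resolvent_le[of \<Lambda> k \<eta>]
      unfolding a_def c_def w_def by (intro ennreal_leI) simp
    also have "\<dots> = 2 * (ennreal a + ennreal c * ennreal (w k))"
      using a c w by (simp add: ennreal_mult ennreal_plus[symmetric])
    finally show "ennreal (coupling_sq \<Lambda> k / ((norm (\<eta> - k))\<^sup>2 + norm k))
          + ennreal (coupling_sq \<Lambda> (- k) / ((norm (\<eta> - - k))\<^sup>2 + norm (- k)))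
        \<le> 2 * (ennreal (coupling_sq \<Lambda> k / ((norm k)\<^sup>2 + norm k)) + ennreal c * ennreal (w k))"
      by (simp add: a_def)
  qed measurable
  also have "\<dots> = (\<integral>\<^sup>+k. ennreal (coupling_sq \<Lambda> k / ((norm k)\<^sup>2 + norm k)) \<partial>lborel)
      + ennreal c * (\<integral>\<^sup>+k. ennreal (w k) \<partial>lborel)"
    by (subst nn_integral_add) (auto intro!: nn_integral_cmult)
  also have "ennreal c * (\<integral>\<^sup>+k. ennreal (w k) \<partial>lborel)
      \<le> ennreal c * ennreal (8 * unit_ball_vol 3 * \<Lambda>)"
    using nn_integral_inverse_square_cball_le[OF L] unfolding w_def by (intro mult_left_mono) auto
  also have "\<dots> = ennreal (8 * unit_ball_vol 3 / pi\<^sup>2 * \<Lambda> * (norm \<eta>)\<^sup>2)"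
  proof -
    have "c * (8 * unit_ball_vol 3 * \<Lambda>) = 8 * unit_ball_vol 3 / pi\<^sup>2 * \<Lambda> * (norm \<eta>)\<^sup>2"
      by (simp add: c_def)
    then show ?thesis
      using c L by (simp flip: ennreal_mult)
  qed
  finally show ?thesis by (simp add: add_left_mono)
qed

lemma nn_integral_coupling_inverse_square_le:
  assumes L: "\<Lambda> > 0"
  shows "(\<integral>\<^sup>+k. ennreal (coupling_sq \<Lambda> k / (norm k)\<^sup>2) \<partial>lborel)
    \<le> ennreal (2 * unit_ball_vol 3 / pi\<^sup>2 * \<Lambda>\<^sup>2)"
proof -
  have [measurable]: "cball (0::real^3) \<Lambda> \<in> sets borel" by simp
  define c where "c = \<Lambda> / (4 * pi\<^sup>2)"
  define w where "w k = indicator (cball 0 \<Lambda>) k / (norm k)\<^sup>2" for k :: "real^3"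
  have c: "c \<ge> 0" using L by (simp add: c_def)
  have [measurable]: "w \<in> borel_measurable borel"
    unfolding w_def by measurable
  have "(\<integral>\<^sup>+k. ennreal (coupling_sq \<Lambda> k / (norm k)\<^sup>2) \<partial>lborel)
      \<le> (\<integral>\<^sup>+k. ennreal c * ennreal (w k) \<partial>lborel)"
  proof (rule nn_integral_mono)
    fix k :: "real^3"
    have "coupling_sq \<Lambda> k / (norm k)\<^sup>2 \<le> c * w k"
    proof (cases "k = 0 \<or> norm k > \<Lambda>")
      case True
      then show ?thesis by (auto simp: coupling_sq_def w_def indicator_def)
    next
      case False
      then have k: "norm k > 0" "norm k \<le> \<Lambda>" by auto
      then have "coupling_sq \<Lambda> k / (norm k)\<^sup>2 = (norm k / (4 * pi\<^sup>2)) / (norm k)\<^sup>2"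
        by (simp add: coupling_sq_def)
      also have "\<dots> \<le> c / (norm k)\<^sup>2"
        unfolding c_def using k by (intro divide_right_mono) auto
      finally show ?thesis using k by (simp add: w_def indicator_def)
    qed
    moreover have "w k \<ge> 0" by (simp add: w_def)
    ultimately show "ennreal (coupling_sq \<Lambda> k / (norm k)\<^sup>2) \<le> ennreal c * ennreal (w k)"
      using c by (simp add: ennreal_mult[symmetric] ennreal_leI)
  qed
  also have "\<dots> = ennreal c * (\<integral>\<^sup>+k. ennreal (w k) \<partial>lborel)"
    by (rule nn_integral_cmult) auto
  also have "\<dots> \<le> ennreal c * ennreal (8 * unit_ball_vol 3 * \<Lambda>)"
    using nn_integral_inverse_square_cball_le[OF L] unfolding w_def by (intro mult_left_mono) auto
  also have "\<dots> = ennreal (2 * unit_ball_vol 3 / pi\<^sup>2 * \<Lambda>\<^sup>2)"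
  proof -
    have "c * (8 * unit_ball_vol 3 * \<Lambda>) = 2 * unit_ball_vol 3 / pi\<^sup>2 * \<Lambda>\<^sup>2"
      unfolding c_def by (simp add: field_simps power2_eq_square)
    then show ?thesis
      using c L by (simp flip: ennreal_mult)
  qed
  finally show ?thesis .
qed

section \<open>Photon configurations\<close>

lemma distr_PiM_reindex_finite:
  fixes M :: "'a measure" and f :: "'i \<Rightarrow> 'j"
  assumes sf: "sigma_finite_measure M" and fin: "finite I" and bij: "bij_betw f I J"
  shows "distr (PiM J (\<lambda>_. M)) (PiM I (\<lambda>_. M)) (\<lambda>\<omega>. \<lambda>n\<in>I. \<omega> (f n)) = PiM I (\<lambda>_. M)"
    (is "distr ?J ?I ?t = ?I")
proof -
  interpret product_sigma_finite "\<lambda>_::'i. M" unfolding product_sigma_finite_def using sf by simp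
  interpret J: product_sigma_finite "\<lambda>_::'j. M" unfolding product_sigma_finite_def using sf by simp
  have finJ: "finite J" using bij fin bij_betw_finite by blast
  have meas: "?t \<in> ?J \<rightarrow>\<^sub>M ?I"
    using bij by (intro measurable_restrict measurable_component_singleton) (auto simp: bij_betw_def)
  show ?thesis
  proof (rule PiM_eqI[OF fin])
    fix A assume A: "\<And>i. i \<in> I \<Longrightarrow> A i \<in> sets M"
    let ?g = "the_inv_into I f"
    have gI: "\<And>j. j \<in> J \<Longrightarrow> ?g j \<in> I" using bij
      by (metis bij_betw_def the_inv_into_into order_refl)
    have fg: "\<And>j. j \<in> J \<Longrightarrow> f (?g j) = j" using bij
      by (simp add: bij_betw_def f_the_inv_into_f)
    have gf: "\<And>i. i \<in> I \<Longrightarrow> ?g (f i) = i" using bij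
      by (simp add: bij_betw_def the_inv_into_f_f)
    have fI: "\<And>i. i \<in> I \<Longrightarrow> f i \<in> J" using bij by (auto simp: bij_betw_def)
    have preimage: "?t -` Pi\<^sub>E I A \<inter> space ?J = Pi\<^sub>E J (\<lambda>j. A (?g j))"
    proof (intro set_eqI iffI)
      fix \<omega> assume "\<omega> \<in> ?t -` Pi\<^sub>E I A \<inter> space ?J"
      then show "\<omega> \<in> Pi\<^sub>E J (\<lambda>j. A (?g j))"
        using gI fg by (fastforce simp: space_PiM PiE_def Pi_def extensional_def)
    next
      fix \<omega> assume w: "\<omega> \<in> Pi\<^sub>E J (\<lambda>j. A (?g j))"
      have "\<omega> \<in> space ?J"
        using w A gI sets.sets_into_space by (fastforce simp: space_PiM PiE_def Pi_def)
      moreover have "?t \<omega> \<in> Pi\<^sub>E I A"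
        using w fI gf by (fastforce simp: PiE_def Pi_def)
      ultimately show "\<omega> \<in> ?t -` Pi\<^sub>E I A \<inter> space ?J" by simp
    qed
    have "emeasure (distr ?J ?I ?t) (Pi\<^sub>E I A) = emeasure ?J (?t -` Pi\<^sub>E I A \<inter> space ?J)"
      using A by (intro emeasure_distr meas sets_PiM_I_finite fin) auto
    also have "\<dots> = (\<Prod>j\<in>J. emeasure M (A (?g j)))"
      unfolding preimage using A gI by (intro J.emeasure_PiM finJ) auto
    also have "\<dots> = (\<Prod>i\<in>I. emeasure M (A i))"
      using bij gf
      by (intro prod.reindex_bij_betw[symmetric, where h=f, THEN trans]) (auto intro!: prod.cong)
    finally show "emeasure (distr ?J ?I ?t) (Pi\<^sub>E I A) = (\<Prod>i\<in>I. emeasure M (A i))" .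
  qed simp
qed

lemma sigma_finite_photon_measure: "sigma_finite_measure photon_measure"
  unfolding photon_measure_def
  by (intro sigma_finite_pair_measure sigma_finite_lborel sigma_finite_measure_count_space_finite) auto

lemma sigma_finite_photons: "sigma_finite_measure (photons m)"
proof -
  interpret product_sigma_finite "\<lambda>_::nat. photon_measure"
    unfolding product_sigma_finite_def using sigma_finite_photon_measure by simp
  interpret finite_product_sigma_finite "\<lambda>_::nat. photon_measure" "{..<m}"
    by standard simp
  show ?thesis unfolding photons_def by (rule sigma_finite_measure_axioms)
qed

lemma space_photon_measure: "space photon_measure = UNIV \<times> {1, 2}"
  unfolding photon_measure_def by (simp add: space_pair_measure)

lemma measurable_fst_photon [measurable]: "fst \<in> photon_measure \<rightarrow>\<^sub>M borel"
  unfolding photon_measure_def using measurable_fst[of lborel "count_space {1::nat, 2}"] by simp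

lemma nn_integral_photon_measure:
  assumes [measurable]: "f \<in> borel_measurable borel"
  shows "(\<integral>\<^sup>+y. f (fst y) \<partial>photon_measure) = 2 * (\<integral>\<^sup>+k. f k \<partial>lborel)"
proof -
  have "(\<integral>\<^sup>+y. f (fst y) \<partial>photon_measure) = (\<integral>\<^sup>+k. (\<integral>\<^sup>+l. f k \<partial>count_space {1::nat, 2}) \<partial>lborel)"
  proof -
    have "(\<lambda>y. f (fst y)) \<in> borel_measurable (lborel \<Otimes>\<^sub>M count_space {1::nat, 2})"
      by measurable
    from sigma_finite_measure.nn_integral_fst[OF sigma_finite_measure_count_space_finite this]
    show ?thesis unfolding photon_measure_def by simp
  qed
  also have "\<dots> = (\<integral>\<^sup>+k. 2 * f k \<partial>lborel)"
    by (subst nn_integral_count_space_finite) (auto simp: mult_2)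
  also have "\<dots> = 2 * (\<integral>\<^sup>+k. f k \<partial>lborel)"
    by (rule nn_integral_cmult) simp
  finally show ?thesis .
qed

lemma bij_betw_skip:
  assumes "i < Suc m"
  shows "bij_betw (\<lambda>j. if j < i then j else Suc j) {..<m} ({..<Suc m} - {i})"
proof (rule bij_betw_imageI)
  show "inj_on (\<lambda>j. if j < i then j else Suc j) {..<m}"
    by (auto simp: inj_on_def split: if_splits)
  show "(\<lambda>j. if j < i then j else Suc j) ` {..<m} = {..<Suc m} - {i}"
  proof (intro set_eqI iffI)
    fix x assume x: "x \<in> {..<Suc m} - {i}"
    show "x \<in> (\<lambda>j. if j < i then j else Suc j) ` {..<m}"
    proof (cases "x < i")
      case True
      then show ?thesis using assms by (intro image_eqI[where x=x]) auto
    next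
      case False
      then show ?thesis using x by (intro image_eqI[where x="x - 1"]) auto
    qed
  qed (use assms in auto)
qed

lemma remove_at_eq_restrict:
  "remove_at m i = (\<lambda>ks. \<lambda>j\<in>{..<m}. ks (if j < i then j else Suc j))"
  by (auto simp: remove_at_def fun_eq_iff)

lemma remove_at_fun_upd:
  assumes "i < Suc m"
  shows "remove_at m i (x(i := y)) = (\<lambda>j\<in>{..<m}. x (if j < i then j else Suc j))"
  using assms by (auto simp: remove_at_def fun_eq_iff)

lemma measurable_remove_at:
  assumes "i < Suc m"
  shows "remove_at m i \<in> photons (Suc m) \<rightarrow>\<^sub>M photons m"
  unfolding remove_at_eq_restrict photons_def using assms
  by (intro measurable_restrict measurable_component_singleton) auto

lemma measurable_photon_component:
  assumes "i < m"
  shows "(\<lambda>ks. ks i) \<in> photons m \<rightarrow>\<^sub>M photon_measure"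
  unfolding photons_def using assms by (intro measurable_component_singleton) auto

lemma measurable_remove_at_pair:
  assumes "i < Suc m"
  shows "(\<lambda>ks. (ks i, remove_at m i ks)) \<in> photons (Suc m) \<rightarrow>\<^sub>M photon_measure \<Otimes>\<^sub>M photons m"
  using assms by (intro measurable_Pair measurable_remove_at measurable_photon_component) auto

lemma nn_integral_remove_at:
  assumes i: "i < Suc m"
    and F [measurable]: "(\<lambda>p. F (fst p) (snd p)) \<in> borel_measurable (photon_measure \<Otimes>\<^sub>M photons m)"
  shows "(\<integral>\<^sup>+ks. F (ks i) (remove_at m i ks) \<partial>photons (Suc m))
       = (\<integral>\<^sup>+K. (\<integral>\<^sup>+y. F y K \<partial>photon_measure) \<partial>photons m)"
proof -
  interpret product_sigma_finite "\<lambda>_::nat. photon_measure"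
    unfolding product_sigma_finite_def using sigma_finite_photon_measure by simp
  let ?P = "\<lambda>I. PiM I (\<lambda>_::nat. photon_measure)"
  define I where "I = {..<Suc m} - {i}"
  define \<rho> where "\<rho> = (\<lambda>j::nat. if j < i then j else Suc j)"
  define R where "R = (\<lambda>x::nat \<Rightarrow> photon. \<lambda>j\<in>{..<m}. x (\<rho> j))"
  have ins: "{..<Suc m} = insert i I" and I: "i \<notin> I" "finite I"
    using i by (auto simp: I_def)
  have R [measurable]: "R \<in> ?P I \<rightarrow>\<^sub>M ?P {..<m}"
    unfolding R_def using i
    by (intro measurable_restrict measurable_component_singleton) (auto simp: \<rho>_def I_def)
  from measurable_compose[OF measurable_remove_at_pair[OF i] F]
  have "(\<integral>\<^sup>+ks. F (ks i) (remove_at m i ks) \<partial>photons (Suc m))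
      = (\<integral>\<^sup>+x. (\<integral>\<^sup>+y. F ((x(i := y)) i) (remove_at m i (x(i := y))) \<partial>photon_measure) \<partial>?P I)"
    unfolding photons_def ins by (subst product_nn_integral_insert[OF I(2,1)]) simp_all
  also have "\<dots> = (\<integral>\<^sup>+x. (\<integral>\<^sup>+y. F y (R x) \<partial>photon_measure) \<partial>?P I)"
    using i by (simp add: remove_at_fun_upd R_def \<rho>_def)
  also have "\<dots> = (\<integral>\<^sup>+K. (\<integral>\<^sup>+y. F y K \<partial>photon_measure) \<partial>distr (?P I) (?P {..<m}) R)"
  proof -
    have "(\<lambda>p. F (snd p) (fst p)) \<in> borel_measurable (photons m \<Otimes>\<^sub>M photon_measure)"
      using measurable_compose[OF measurable_Pair[OF measurable_snd measurable_fst] F] by simp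
    then have "(\<lambda>K. \<integral>\<^sup>+y. F y K \<partial>photon_measure) \<in> borel_measurable (?P {..<m})"
      using sigma_finite_measure.borel_measurable_nn_integral[OF sigma_finite_photon_measure,
          of "\<lambda>K y. F y K" "photons m"]
      unfolding photons_def by (simp add: case_prod_beta')
    then show ?thesis by (simp add: nn_integral_distr[OF R])
  qed
  also have "distr (?P I) (?P {..<m}) R = photons m"
    unfolding photons_def R_def using i
    by (intro distr_PiM_reindex_finite sigma_finite_photon_measure)
      (auto simp: I_def \<rho>_def bij_betw_skip)
  finally show ?thesis .
qed

lemma nn_integral_average_remove_at:
  assumes F [measurable]: "(\<lambda>p. F (fst p) (snd p)) \<in> borel_measurable (photon_measure \<Otimes>\<^sub>M photons m)"
  shows "(\<integral>\<^sup>+ks. ennreal (1 / real (Suc m)) * (\<Sum>i<Suc m. F (ks i) (remove_at m i ks)) \<partial>photons (Suc m))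
       = (\<integral>\<^sup>+K. (\<integral>\<^sup>+y. F y K \<partial>photon_measure) \<partial>photons m)"
    (is "_ = ?G")
proof -
  have meas: "(\<lambda>ks. F (ks i) (remove_at m i ks)) \<in> borel_measurable (photons (Suc m))"
    if "i < Suc m" for i
    using measurable_compose[OF measurable_remove_at_pair[OF that] F] by simp
  have "(\<integral>\<^sup>+ks. ennreal (1 / real (Suc m)) * (\<Sum>i<Suc m. F (ks i) (remove_at m i ks)) \<partial>photons (Suc m))
      = ennreal (1 / real (Suc m)) * (\<Sum>i<Suc m. \<integral>\<^sup>+ks. F (ks i) (remove_at m i ks) \<partial>photons (Suc m))"
  proof -
    have "(\<integral>\<^sup>+ks. (\<Sum>i<Suc m. F (ks i) (remove_at m i ks)) \<partial>photons (Suc m))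
        = (\<Sum>i<Suc m. \<integral>\<^sup>+ks. F (ks i) (remove_at m i ks) \<partial>photons (Suc m))"
      using meas by (intro nn_integral_sum) auto
    then show ?thesis
      using meas
      by (subst nn_integral_cmult) (auto intro!: borel_measurable_sum simp del: sum.lessThan_Suc)
  qed
  also have "\<dots> = ennreal (1 / real (Suc m)) * (of_nat (Suc m) * ?G)"
    by (simp add: nn_integral_remove_at[OF _ F] del: sum.lessThan_Suc)
  also have "\<dots> = ?G"
    by (simp add: mult.assoc[symmetric] ennreal_of_nat_eq_real_of_nat ennreal_mult[symmetric]
        del: of_nat_Suc)
  finally show ?thesis .
qed

lemma nn_integral_photon_shift:
  fixes G :: "real^3 \<Rightarrow> photon \<Rightarrow> (nat \<Rightarrow> photon) \<Rightarrow> ennreal"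
  assumes G: "(\<lambda>x. G (fst x) (fst (snd x)) (snd (snd x)))
      \<in> borel_measurable (lborel \<Otimes>\<^sub>M photon_measure \<Otimes>\<^sub>M photons m)"
  shows "(\<integral>\<^sup>+\<xi>. (\<integral>\<^sup>+K. (\<integral>\<^sup>+y. G \<xi> y K \<partial>photon_measure) \<partial>photons m) \<partial>lborel)
       = (\<integral>\<^sup>+\<eta>. (\<integral>\<^sup>+K. (\<integral>\<^sup>+y. G (\<eta> - fst y) y K \<partial>photon_measure) \<partial>photons m) \<partial>lborel)"
proof -
  let ?Q = "photons m \<Otimes>\<^sub>M photon_measure"
  interpret Q: sigma_finite_measure ?Q
    by (intro sigma_finite_pair_measure sigma_finite_photons sigma_finite_photon_measure)
  interpret pair_sigma_finite lborel ?Q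
    by (intro pair_sigma_finite.intro sigma_finite_lborel Q.sigma_finite_measure_axioms)
  \<comment> \<open>\<open>c = 0\<close> and \<open>c = 1\<close> give the integrands before and after the shift.\<close>
  have shifted: "(\<lambda>x. G (fst x - c *\<^sub>R fst (snd (snd x))) (snd (snd x)) (fst (snd x)))
      \<in> borel_measurable (lborel \<Otimes>\<^sub>M ?Q)" for c :: real
  proof -
    have "(\<lambda>x. (fst x - c *\<^sub>R fst (snd (snd x)), snd (snd x), fst (snd x)))
        \<in> lborel \<Otimes>\<^sub>M ?Q \<rightarrow>\<^sub>M lborel \<Otimes>\<^sub>M photon_measure \<Otimes>\<^sub>M photons m"
      by measurable
    from measurable_compose[OF this G] show ?thesis by simp
  qed
  note m0 = shifted[of 0, simplified] and m1 = shifted[of 1, simplified]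
  have iterated: "(\<integral>\<^sup>+K. (\<integral>\<^sup>+y. f (K, y) \<partial>photon_measure) \<partial>photons m) = (\<integral>\<^sup>+z. f z \<partial>?Q)"
    if "f \<in> borel_measurable ?Q" for f
    by (rule sigma_finite_measure.nn_integral_fst[OF sigma_finite_photon_measure that])
  have "(\<integral>\<^sup>+\<xi>. (\<integral>\<^sup>+K. (\<integral>\<^sup>+y. G \<xi> y K \<partial>photon_measure) \<partial>photons m) \<partial>lborel)
      = (\<integral>\<^sup>+\<xi>. (\<integral>\<^sup>+z. G \<xi> (snd z) (fst z) \<partial>?Q) \<partial>lborel)"
  proof (rule nn_integral_cong)
    fix \<xi> :: "real^3"
    have "(\<lambda>z. G \<xi> (snd z) (fst z)) \<in> borel_measurable ?Q"
      using measurable_Pair2[OF m0, of \<xi>] by simp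
    from iterated[OF this] show "(\<integral>\<^sup>+K. (\<integral>\<^sup>+y. G \<xi> y K \<partial>photon_measure) \<partial>photons m)
        = (\<integral>\<^sup>+z. G \<xi> (snd z) (fst z) \<partial>?Q)" by simp
  qed
  also have "\<dots> = (\<integral>\<^sup>+z. (\<integral>\<^sup>+\<xi>. G \<xi> (snd z) (fst z) \<partial>lborel) \<partial>?Q)"
    using Fubini'[of "\<lambda>\<xi> z. G \<xi> (snd z) (fst z)"] m0 by (simp add: case_prod_beta)
  also have "\<dots> = (\<integral>\<^sup>+z. (\<integral>\<^sup>+\<eta>. G (\<eta> - fst (snd z)) (snd z) (fst z) \<partial>lborel) \<partial>?Q)"
  proof (rule nn_integral_cong)
    fix z assume z: "z \<in> space ?Q"
    have [measurable]: "(\<lambda>\<xi>. G \<xi> (snd z) (fst z)) \<in> borel_measurable borel"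
      using measurable_Pair1[OF m0 z] by simp
    have "(\<integral>\<^sup>+\<xi>. G \<xi> (snd z) (fst z) \<partial>lborel)
        = (\<integral>\<^sup>+\<xi>. G \<xi> (snd z) (fst z) \<partial>distr lborel borel ((+) (- fst (snd z))))"
      by (simp add: lborel_distr_plus)
    also have "\<dots> = (\<integral>\<^sup>+\<eta>. G (\<eta> - fst (snd z)) (snd z) (fst z) \<partial>lborel)"
      by (subst nn_integral_distr) auto
    finally show "(\<integral>\<^sup>+\<xi>. G \<xi> (snd z) (fst z) \<partial>lborel)
        = (\<integral>\<^sup>+\<eta>. G (\<eta> - fst (snd z)) (snd z) (fst z) \<partial>lborel)" .
  qed
  also have "\<dots> = (\<integral>\<^sup>+\<eta>. (\<integral>\<^sup>+z. G (\<eta> - fst (snd z)) (snd z) (fst z) \<partial>?Q) \<partial>lborel)"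
    using Fubini'[of "\<lambda>\<eta> z. G (\<eta> - fst (snd z)) (snd z) (fst z)"] m1
    by (simp add: case_prod_beta)
  also have "\<dots> = (\<integral>\<^sup>+\<eta>. (\<integral>\<^sup>+K. (\<integral>\<^sup>+y. G (\<eta> - fst y) y K \<partial>photon_measure) \<partial>photons m) \<partial>lborel)"
  proof (rule nn_integral_cong)
    fix \<eta> :: "real^3"
    have "(\<lambda>z. G (\<eta> - fst (snd z)) (snd z) (fst z)) \<in> borel_measurable ?Q"
      using measurable_Pair2[OF m1, of \<eta>] by simp
    from iterated[OF this] show "(\<integral>\<^sup>+z. G (\<eta> - fst (snd z)) (snd z) (fst z) \<partial>?Q)
        = (\<integral>\<^sup>+K. (\<integral>\<^sup>+y. G (\<eta> - fst y) y K \<partial>photon_measure) \<partial>photons m)" by simp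
  qed
  finally show ?thesis .
qed

section \<open>The emission bound\<close>

definition spin_norm_sq :: "msector \<Rightarrow> real^3 \<Rightarrow> (nat \<Rightarrow> photon) \<Rightarrow> real" where
  "spin_norm_sq \<psi> \<xi> K = (\<Sum>t<2. (cmod (\<psi> \<xi> K t))\<^sup>2)"

definition photon_energy :: "nat \<Rightarrow> (nat \<Rightarrow> photon) \<Rightarrow> real" where
  "photon_energy m K = (\<Sum>j<m. norm (fst (K j)))"

lemma spin_norm_sq_nonneg: "spin_norm_sq \<psi> \<xi> K \<ge> 0"
  by (simp add: spin_norm_sq_def sum_nonneg)

lemma photon_energy_nonneg: "photon_energy m K \<ge> 0"
  by (simp add: photon_energy_def sum_nonneg)

lemma photon_energy_remove_at:
  assumes "i < Suc m"
  shows "photon_energy m (remove_at m i ks) = (\<Sum>j\<in>{..<Suc m}-{i}. norm (fst (ks j)))"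
proof -
  have "photon_energy m (remove_at m i ks) = (\<Sum>j<m. norm (fst (ks (if j < i then j else Suc j))))"
    unfolding photon_energy_def remove_at_def by (intro sum.cong) auto
  also have "\<dots> = (\<Sum>j\<in>{..<Suc m}-{i}. norm (fst (ks j)))"
    using sum.reindex_bij_betw[OF bij_betw_skip[OF assms], of "\<lambda>j. norm (fst (ks j))"] by simp
  finally show ?thesis .
qed

lemma sigmaEstar_eq_sum:
  "sigmaEstar eps \<Lambda> m \<psi> \<xi> ks s = of_real (1 / sqrt (real (Suc m))) *
     (\<Sum>i<Suc m. \<Sum>j\<in>UNIV. \<Sum>t<2. pauli j s t * cnj (Hvec eps \<Lambda> (snd (ks i)) (fst (ks i)) $ j)
        * \<psi> (\<xi> + fst (ks i)) (remove_at m i ks) t)"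
proof -
  define F where "F i j t = pauli j s t * cnj (Hvec eps \<Lambda> (snd (ks i)) (fst (ks i)) $ j)
     * \<psi> (\<xi> + fst (ks i)) (remove_at m i ks) t" for i j t
  have "sigmaEstar eps \<Lambda> m \<psi> \<xi> ks s
      = of_real (1 / sqrt (real (Suc m))) * (\<Sum>j\<in>UNIV. \<Sum>t<2. \<Sum>i<Suc m. F i j t)"
    unfolding sigmaEstar_def Estar_def F_def
    by (simp add: sum_distrib_left mult.assoc mult.left_commute del: sum.lessThan_Suc)
  also have "(\<Sum>j\<in>UNIV. \<Sum>t<2. \<Sum>i<Suc m. F i j t) = (\<Sum>i<Suc m. \<Sum>j\<in>UNIV. \<Sum>t<2. F i j t)"
    by (simp add: sum.swap[of _ "{..<Suc m}"] del: sum.lessThan_Suc)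
  finally show ?thesis unfolding F_def .
qed

text \<open>Triangle inequality in spin space, then \<open>square_sum_div_le\<close> with \<open>x = |\<xi>|\<^sup>2\<close> and
  \<open>r\<^sub>i = |k\<^sub>i|\<close>.\<close>

lemma sigmaEstar_resolvent_density_le:
  "(\<Sum>s<2. (cmod (sigmaEstar eps \<Lambda> m \<psi> \<xi> ks s))\<^sup>2 / ((norm \<xi>)\<^sup>2 + (\<Sum>i<Suc m. norm (fst (ks i)))))
    \<le> 1 / real (Suc m) * (\<Sum>i<Suc m. (norm (Hvec eps \<Lambda> (snd (ks i)) (fst (ks i))))\<^sup>2
          * spin_norm_sq \<psi> (\<xi> + fst (ks i)) (remove_at m i ks)
          * (1 / ((norm \<xi>)\<^sup>2 + norm (fst (ks i)))
             + photon_energy m (remove_at m i ks) / (norm (fst (ks i)))\<^sup>2))"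
proof -
  define a where "a i s = (\<Sum>j\<in>UNIV. \<Sum>t<2. pauli j s t * cnj (Hvec eps \<Lambda> (snd (ks i)) (fst (ks i)) $ j)
       * \<psi> (\<xi> + fst (ks i)) (remove_at m i ks) t)" for i s
  define n where "n i = L2_set (\<lambda>s. cmod (a i s)) {..<2}" for i
  define r where "r i = norm (fst (ks i))" for i
  define x where "x = (norm \<xi>)\<^sup>2"
  have n_sq: "(n i)\<^sup>2 = (norm (Hvec eps \<Lambda> (snd (ks i)) (fst (ks i))))\<^sup>2
      * spin_norm_sq \<psi> (\<xi> + fst (ks i)) (remove_at m i ks)" for i
    unfolding n_def L2_set_def a_def spin_norm_sq_def
    by (simp add: sum_nonneg pauli_Hvec_spinor_norm_sq)
  define c where "c = complex_of_real (1 / sqrt (real (Suc m)))"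
  have c: "(cmod c)\<^sup>2 = 1 / real (Suc m)"
    unfolding c_def norm_divide norm_one norm_of_real by (simp add: power_divide)
  have "(\<Sum>s<2. (cmod (sigmaEstar eps \<Lambda> m \<psi> \<xi> ks s))\<^sup>2)
      = (cmod c)\<^sup>2 * (\<Sum>s<2. (cmod (\<Sum>i<Suc m. a i s))\<^sup>2)"
    unfolding sigmaEstar_eq_sum c_def[symmetric] a_def
    by (simp add: norm_mult power_mult_distrib flip: sum_distrib_left del: sum.lessThan_Suc)
  also have "\<dots> = 1 / real (Suc m) * (L2_set (\<lambda>s. cmod (\<Sum>i<Suc m. a i s)) {..<2})\<^sup>2"
    unfolding c L2_set_def by (simp add: sum_nonneg)
  also have "\<dots> \<le> 1 / real (Suc m) * (\<Sum>i<Suc m. n i)\<^sup>2"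
    unfolding n_def by (intro mult_left_mono power_mono L2_set_sum_le) auto
  finally have numerator: "(\<Sum>s<2. (cmod (sigmaEstar eps \<Lambda> m \<psi> \<xi> ks s))\<^sup>2)
      \<le> 1 / real (Suc m) * (\<Sum>i<Suc m. n i)\<^sup>2" .
  have "(\<Sum>s<2. (cmod (sigmaEstar eps \<Lambda> m \<psi> \<xi> ks s))\<^sup>2 / ((norm \<xi>)\<^sup>2 + (\<Sum>i<Suc m. norm (fst (ks i)))))
      = (\<Sum>s<2. (cmod (sigmaEstar eps \<Lambda> m \<psi> \<xi> ks s))\<^sup>2) / (x + (\<Sum>i<Suc m. r i))"
    unfolding x_def r_def by (simp add: sum_divide_distrib)
  also have "\<dots> \<le> 1 / real (Suc m) * (\<Sum>i<Suc m. n i)\<^sup>2 / (x + (\<Sum>i<Suc m. r i))"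
    using numerator
    by (intro divide_right_mono) (auto simp: x_def r_def intro!: add_nonneg_nonneg sum_nonneg)
  also have "\<dots> = 1 / real (Suc m) * ((\<Sum>i<Suc m. n i)\<^sup>2 / (x + (\<Sum>i<Suc m. r i)))"
    by simp
  also have "\<dots> \<le> 1 / real (Suc m) * (\<Sum>i<Suc m. (n i)\<^sup>2 * (1 / (x + r i) + (\<Sum>j\<in>{..<Suc m}-{i}. r j) / (r i)\<^sup>2))"
  proof (intro mult_left_mono square_sum_div_le)
    fix i assume "r i = 0"
    then have "(n i)\<^sup>2 = 0" by (simp add: r_def n_sq)
    then show "n i = 0" by simp
  qed (auto simp: x_def r_def n_def)
  also have "\<dots> = 1 / real (Suc m) * (\<Sum>i<Suc m. (norm (Hvec eps \<Lambda> (snd (ks i)) (fst (ks i))))\<^sup>2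
          * spin_norm_sq \<psi> (\<xi> + fst (ks i)) (remove_at m i ks)
          * (1 / ((norm \<xi>)\<^sup>2 + norm (fst (ks i)))
             + photon_energy m (remove_at m i ks) / (norm (fst (ks i)))\<^sup>2))"
    by (simp add: n_sq photon_energy_remove_at x_def r_def del: sum.lessThan_Suc)
  finally show ?thesis .
qed

definition emission_density ::
    "real \<Rightarrow> nat \<Rightarrow> msector \<Rightarrow> real^3 \<Rightarrow> photon \<Rightarrow> (nat \<Rightarrow> photon) \<Rightarrow> ennreal" where
  "emission_density \<Lambda> m \<psi> \<xi> y K = ennreal (coupling_sq \<Lambda> (fst y) * spin_norm_sq \<psi> (\<xi> + fst y) K
      * (1 / ((norm \<xi>)\<^sup>2 + norm (fst y)) + photon_energy m K / (norm (fst y))\<^sup>2))"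

lemma measurable_photon_energy [measurable]: "photon_energy m \<in> borel_measurable (photons m)"
  unfolding photon_energy_def photons_def by measurable

lemma measurable_spin_norm_sq:
  assumes \<psi>: "sector_vector m \<psi>"
    and f: "f \<in> M \<rightarrow>\<^sub>M borel" and g: "g \<in> M \<rightarrow>\<^sub>M photons m"
  shows "(\<lambda>x. spin_norm_sq \<psi> (f x) (g x)) \<in> borel_measurable M"
proof -
  have fg: "(\<lambda>x. (f x, g x)) \<in> M \<rightarrow>\<^sub>M lborel \<Otimes>\<^sub>M photons m"
    using f g by (simp add: measurable_Pair)
  have "(\<lambda>x. \<psi> (f x) (g x) t) \<in> borel_measurable M" if "t < 2" for t
  proof -
    have "(\<lambda>(\<xi>, K). \<psi> \<xi> K t) \<in> borel_measurable (lborel \<Otimes>\<^sub>M photons m)"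
      using \<psi> that unfolding sector_vector_def by blast
    from measurable_compose[OF fg this] show ?thesis by simp
  qed
  then show ?thesis unfolding spin_norm_sq_def
    by (intro borel_measurable_sum) (auto intro!: borel_measurable_power borel_measurable_norm)
qed

lemma measurable_emission_density:
  assumes \<psi>: "sector_vector m \<psi>"
    and [measurable]: "f \<in> M \<rightarrow>\<^sub>M borel" "y \<in> M \<rightarrow>\<^sub>M photon_measure" "g \<in> M \<rightarrow>\<^sub>M photons m"
  shows "(\<lambda>x. emission_density \<Lambda> m \<psi> (f x) (y x) (g x)) \<in> borel_measurable M"
proof -
  have [measurable]: "(\<lambda>x. spin_norm_sq \<psi> (f x + fst (y x)) (g x)) \<in> borel_measurable M"
    by (rule measurable_spin_norm_sq[OF \<psi>]) measurable
  show ?thesis unfolding emission_density_def by measurable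
qed

lemma resolvent_density_le_emission_density:
  assumes pol: "polarization eps" and ks: "ks \<in> space (photons (Suc m))"
  shows "(\<Sum>s<2. ennreal ((cmod (sigmaEstar eps \<Lambda> m \<psi> \<xi> ks s))\<^sup>2
            / ((norm \<xi>)\<^sup>2 + (\<Sum>i<Suc m. norm (fst (ks i))))))
    \<le> ennreal (1 / real (Suc m)) * (\<Sum>i<Suc m. emission_density \<Lambda> m \<psi> \<xi> (ks i) (remove_at m i ks))"
proof -
  have pol_i: "snd (ks i) \<in> {1, 2}" if "i < Suc m" for i
    using measurable_space[OF measurable_photon_component[OF that] ks]
    by (simp add: space_photon_measure mem_Times_iff)
  define X where "X i = coupling_sq \<Lambda> (fst (ks i)) * spin_norm_sq \<psi> (\<xi> + fst (ks i)) (remove_at m i ks)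
    * (1 / ((norm \<xi>)\<^sup>2 + norm (fst (ks i))) + photon_energy m (remove_at m i ks) / (norm (fst (ks i)))\<^sup>2)"
    for i
  have X: "X i \<ge> 0" "ennreal (X i) = emission_density \<Lambda> m \<psi> \<xi> (ks i) (remove_at m i ks)" for i
    by (simp_all add: X_def emission_density_def coupling_sq_nonneg spin_norm_sq_nonneg
        photon_energy_nonneg)
  have "(\<Sum>s<2. ennreal ((cmod (sigmaEstar eps \<Lambda> m \<psi> \<xi> ks s))\<^sup>2
          / ((norm \<xi>)\<^sup>2 + (\<Sum>i<Suc m. norm (fst (ks i))))))
      = ennreal (\<Sum>s<2. (cmod (sigmaEstar eps \<Lambda> m \<psi> \<xi> ks s))\<^sup>2
          / ((norm \<xi>)\<^sup>2 + (\<Sum>i<Suc m. norm (fst (ks i)))))"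
    by (intro sum_ennreal divide_nonneg_nonneg add_nonneg_nonneg sum_nonneg) auto
  also have "\<dots> \<le> ennreal (1 / real (Suc m) * (\<Sum>i<Suc m. X i))"
    using sigmaEstar_resolvent_density_le[of eps \<Lambda> m \<psi> \<xi> ks]
    by (intro ennreal_leI) (simp add: X_def norm_Hvec_sq[OF pol pol_i] del: sum.lessThan_Suc)
  also have "\<dots> = ennreal (1 / real (Suc m)) * ennreal (\<Sum>i<Suc m. X i)"
    by (rule ennreal_mult) (simp_all add: sum_nonneg X(1))
  also have "\<dots> = ennreal (1 / real (Suc m)) * (\<Sum>i<Suc m. ennreal (X i))"
    using X(1) by (simp add: sum_ennreal del: sum.lessThan_Suc)
  finally show ?thesis
    by (simp only: X(2))
qed

lemma resolvent_form_sigmaEstar_le: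
  assumes pol: "polarization eps" and \<psi>: "sector_vector m \<psi>"
  shows "resolvent_form (Suc m) (sigmaEstar eps \<Lambda> m \<psi>)
    \<le> (\<integral>\<^sup>+\<eta>. (\<integral>\<^sup>+K. (\<integral>\<^sup>+y. emission_density \<Lambda> m \<psi> (\<eta> - fst y) y K \<partial>photon_measure)
          \<partial>photons m) \<partial>lborel)"
proof -
  note measurable_emission_density[OF \<psi>, measurable (raw)]
  let ?B = "emission_density \<Lambda> m \<psi>"
  have "resolvent_form (Suc m) (sigmaEstar eps \<Lambda> m \<psi>)
      \<le> (\<integral>\<^sup>+\<xi>. (\<integral>\<^sup>+ks. ennreal (1 / real (Suc m)) * (\<Sum>i<Suc m. ?B \<xi> (ks i) (remove_at m i ks))
            \<partial>photons (Suc m)) \<partial>lborel)"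
    unfolding resolvent_form_def
    by (intro nn_integral_mono resolvent_density_le_emission_density[OF pol])
  also have "\<dots> = (\<integral>\<^sup>+\<xi>. (\<integral>\<^sup>+K. (\<integral>\<^sup>+y. ?B \<xi> y K \<partial>photon_measure) \<partial>photons m) \<partial>lborel)"
    by (intro nn_integral_cong nn_integral_average_remove_at) measurable
  also have "\<dots> = (\<integral>\<^sup>+\<eta>. (\<integral>\<^sup>+K. (\<integral>\<^sup>+y. ?B (\<eta> - fst y) y K \<partial>photon_measure) \<partial>photons m) \<partial>lborel)"
    by (intro nn_integral_photon_shift) measurable
  finally show ?thesis .
qed

lemma nn_integral_emission_density_le:
  assumes pol: "polarization eps" and L: "\<Lambda> > 0"
  shows "(\<integral>\<^sup>+y. emission_density \<Lambda> m \<psi> (\<eta> - fst y) y K \<partial>photon_measure)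
    \<le> epsE eps \<Lambda> * ennreal (spin_norm_sq \<psi> \<eta> K)
       + ennreal (16 * unit_ball_vol 3 / pi\<^sup>2 * \<Lambda>)
         * (ennreal ((norm \<eta>)\<^sup>2 * spin_norm_sq \<psi> \<eta> K)
            + ennreal \<Lambda> * ennreal (photon_energy m K * spin_norm_sq \<psi> \<eta> K))"
proof -
  define N where "N = spin_norm_sq \<psi> \<eta> K"
  define h where "h = photon_energy m K"
  define V where "V = unit_ball_vol 3"
  define Q where "Q = (\<integral>\<^sup>+k. ennreal (coupling_sq \<Lambda> k / ((norm k)\<^sup>2 + norm k)) \<partial>lborel)"
  define X where "X = (\<integral>\<^sup>+k. ennreal (coupling_sq \<Lambda> k / ((norm (\<eta> - k))\<^sup>2 + norm k)) \<partial>lborel)"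
  define Y where "Y = (\<integral>\<^sup>+k. ennreal (coupling_sq \<Lambda> k / (norm k)\<^sup>2) \<partial>lborel)"
  define a where "a = 8 * V / pi\<^sup>2 * \<Lambda> * (norm \<eta>)\<^sup>2"
  define b where "b = 2 * V / pi\<^sup>2 * \<Lambda>\<^sup>2"
  have V: "V > 0" unfolding V_def by simp
  have N: "N \<ge> 0" and h: "h \<ge> 0"
    unfolding N_def h_def by (simp_all add: spin_norm_sq_nonneg photon_energy_nonneg)
  have a: "a \<ge> 0" and b: "b \<ge> 0" unfolding a_def b_def using V L by auto
  define f where "f k = ennreal N * (ennreal (coupling_sq \<Lambda> k / ((norm (\<eta> - k))\<^sup>2 + norm k))
      + ennreal h * ennreal (coupling_sq \<Lambda> k / (norm k)\<^sup>2))" for k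
  have density_eq: "emission_density \<Lambda> m \<psi> (\<eta> - fst y) y K = f (fst y)" for y
  proof -
    define c where "c = coupling_sq \<Lambda> (fst y)"
    define A where "A = c / ((norm (\<eta> - fst y))\<^sup>2 + norm (fst y))"
    define B where "B = c / (norm (fst y))\<^sup>2"
    have A: "A \<ge> 0" and B: "B \<ge> 0"
      unfolding A_def B_def c_def using coupling_sq_nonneg by simp_all
    have "emission_density \<Lambda> m \<psi> (\<eta> - fst y) y K
        = ennreal (c * N * (1 / ((norm (\<eta> - fst y))\<^sup>2 + norm (fst y)) + h / (norm (fst y))\<^sup>2))"
      by (simp add: emission_density_def c_def N_def h_def)
    also have "\<dots> = ennreal (N * (A + h * B))"
      unfolding A_def B_def by (simp add: field_simps)
    also have "\<dots> = ennreal N * (ennreal A + ennreal h * ennreal B)"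
      using N A h B by (simp only: ennreal_mult ennreal_plus mult_nonneg_nonneg add_nonneg_nonneg)
    finally show ?thesis unfolding f_def A_def B_def c_def .
  qed
  have "(\<integral>\<^sup>+y. emission_density \<Lambda> m \<psi> (\<eta> - fst y) y K \<partial>photon_measure) = 2 * (\<integral>\<^sup>+k. f k \<partial>lborel)"
    unfolding density_eq by (rule nn_integral_photon_measure) (simp add: f_def)
  also have "(\<integral>\<^sup>+k. f k \<partial>lborel) = ennreal N * (X + ennreal h * Y)"
    unfolding f_def X_def Y_def by (simp add: nn_integral_cmult nn_integral_add)
  also have "2 * (ennreal N * (X + ennreal h * Y))
      \<le> 2 * (ennreal N * ((Q + ennreal a) + ennreal h * ennreal b))"
    using nn_integral_coupling_shifted_resolvent_le[OF L, of \<eta>]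
      nn_integral_coupling_inverse_square_le[OF L]
    unfolding X_def Y_def Q_def a_def b_def V_def
    by (intro mult_left_mono add_mono) auto
  also have "\<dots> = (2 * Q) * ennreal N + ennreal (2 * N * a + 2 * N * (h * b))"
    using N a h b by (simp add: distrib_left ennreal_mult ennreal_plus mult_ac)
  also have "\<dots> \<le> epsE eps \<Lambda> * ennreal N
      + ennreal (16 * V / pi\<^sup>2 * \<Lambda> * ((norm \<eta>)\<^sup>2 * N + \<Lambda> * (h * N)))"
  proof -
    have "2 * N * (h * b) \<le> 16 * V / pi\<^sup>2 * \<Lambda> * (\<Lambda> * (h * N))"
      using N h V L by (simp add: b_def power2_eq_square field_simps)
    moreover have "2 * N * a = 16 * V / pi\<^sup>2 * \<Lambda> * ((norm \<eta>)\<^sup>2 * N)"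
      by (simp add: a_def field_simps)
    ultimately have "2 * N * a + 2 * N * (h * b) \<le> 16 * V / pi\<^sup>2 * \<Lambda> * ((norm \<eta>)\<^sup>2 * N + \<Lambda> * (h * N))"
      unfolding distrib_left by linarith
    then show ?thesis
      unfolding epsE_eq[OF pol] Q_def by (intro add_left_mono ennreal_leI)
  qed
  also have "\<dots> = epsE eps \<Lambda> * ennreal N + ennreal (16 * V / pi\<^sup>2 * \<Lambda>)
      * (ennreal ((norm \<eta>)\<^sup>2 * N) + ennreal \<Lambda> * ennreal (h * N))"
  proof -
    define C where "C = 16 * V / pi\<^sup>2 * \<Lambda>"
    define x where "x = (norm \<eta>)\<^sup>2 * N"
    define z where "z = h * N"
    have "C \<ge> 0" "x \<ge> 0" "z \<ge> 0" "\<Lambda> \<ge> 0"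
      using V L N h by (simp_all add: C_def x_def z_def)
    then have "ennreal (C * (x + \<Lambda> * z)) = ennreal C * (ennreal x + ennreal \<Lambda> * ennreal z)"
      by (simp only: ennreal_mult ennreal_plus mult_nonneg_nonneg add_nonneg_nonneg)
    then show ?thesis unfolding C_def x_def z_def by simp
  qed
  finally show ?thesis unfolding N_def h_def V_def .
qed

lemma nn_integral_sector_forms:
  assumes \<psi>: "sector_vector m \<psi>"
  shows "(\<integral>\<^sup>+\<eta>. (\<integral>\<^sup>+K. E * ennreal (spin_norm_sq \<psi> \<eta> K)
            + c * (ennreal ((norm \<eta>)\<^sup>2 * spin_norm_sq \<psi> \<eta> K)
                   + ennreal \<Lambda> * ennreal (photon_energy m K * spin_norm_sq \<psi> \<eta> K)) \<partial>photons m) \<partial>lborel)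
     = E * norm_sq m \<psi> + c * (p_norm_sq m \<psi> + ennreal \<Lambda> * Hf_form m \<psi>)"
proof -
  interpret sigma_finite_measure "photons m" by (rule sigma_finite_photons)
  have N [measurable]: "(\<lambda>p. spin_norm_sq \<psi> (fst p) (snd p)) \<in> borel_measurable (lborel \<Otimes>\<^sub>M photons m)"
    by (rule measurable_spin_norm_sq[OF \<psi>]) auto
  have forms: "norm_sq m \<psi> = (\<integral>\<^sup>+\<eta>. (\<integral>\<^sup>+K. ennreal (spin_norm_sq \<psi> \<eta> K) \<partial>photons m) \<partial>lborel)"
    "p_norm_sq m \<psi> = (\<integral>\<^sup>+\<eta>. (\<integral>\<^sup>+K. ennreal ((norm \<eta>)\<^sup>2 * spin_norm_sq \<psi> \<eta> K) \<partial>photons m) \<partial>lborel)"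
    "Hf_form m \<psi> = (\<integral>\<^sup>+\<eta>. (\<integral>\<^sup>+K. ennreal (photon_energy m K * spin_norm_sq \<psi> \<eta> K) \<partial>photons m) \<partial>lborel)"
    unfolding norm_sq_def p_norm_sq_def Hf_form_def spin_norm_sq_def photon_energy_def
    by (simp_all add: sum_distrib_left sum_nonneg)
  have m1: "(\<lambda>(\<eta>, K). ennreal (spin_norm_sq \<psi> \<eta> K)) \<in> borel_measurable (lborel \<Otimes>\<^sub>M photons m)"
    and m2: "(\<lambda>(\<eta>, K). ennreal ((norm \<eta>)\<^sup>2 * spin_norm_sq \<psi> \<eta> K)) \<in> borel_measurable (lborel \<Otimes>\<^sub>M photons m)"
    and m3: "(\<lambda>(\<eta>, K). ennreal (photon_energy m K * spin_norm_sq \<psi> \<eta> K))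
      \<in> borel_measurable (lborel \<Otimes>\<^sub>M photons m)"
    unfolding case_prod_beta by measurable
  have "(\<integral>\<^sup>+K. E * ennreal (spin_norm_sq \<psi> \<eta> K)
            + c * (ennreal ((norm \<eta>)\<^sup>2 * spin_norm_sq \<psi> \<eta> K)
                   + ennreal \<Lambda> * ennreal (photon_energy m K * spin_norm_sq \<psi> \<eta> K)) \<partial>photons m)
      = E * (\<integral>\<^sup>+K. ennreal (spin_norm_sq \<psi> \<eta> K) \<partial>photons m)
        + c * ((\<integral>\<^sup>+K. ennreal ((norm \<eta>)\<^sup>2 * spin_norm_sq \<psi> \<eta> K) \<partial>photons m)
               + ennreal \<Lambda> * (\<integral>\<^sup>+K. ennreal (photon_energy m K * spin_norm_sq \<psi> \<eta> K) \<partial>photons m))"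
    for \<eta> :: "real^3"
  proof -
    have "(\<lambda>K. ennreal (spin_norm_sq \<psi> \<eta> K)) \<in> borel_measurable (photons m)"
      "(\<lambda>K. ennreal ((norm \<eta>)\<^sup>2 * spin_norm_sq \<psi> \<eta> K)) \<in> borel_measurable (photons m)"
      "(\<lambda>K. ennreal (photon_energy m K * spin_norm_sq \<psi> \<eta> K)) \<in> borel_measurable (photons m)"
      using measurable_Pair2[OF m1, of \<eta>] measurable_Pair2[OF m2, of \<eta>] measurable_Pair2[OF m3, of \<eta>]
      by simp_all
    then show ?thesis by (simp add: nn_integral_add nn_integral_cmult)
  qed
  moreover have "(\<lambda>\<eta>. \<integral>\<^sup>+K. ennreal (spin_norm_sq \<psi> \<eta> K) \<partial>photons m) \<in> borel_measurable lborel"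
    "(\<lambda>\<eta>. \<integral>\<^sup>+K. ennreal ((norm \<eta>)\<^sup>2 * spin_norm_sq \<psi> \<eta> K) \<partial>photons m) \<in> borel_measurable lborel"
    "(\<lambda>\<eta>. \<integral>\<^sup>+K. ennreal (photon_energy m K * spin_norm_sq \<psi> \<eta> K) \<partial>photons m) \<in> borel_measurable lborel"
    using borel_measurable_nn_integral[OF m1] borel_measurable_nn_integral[OF m2]
      borel_measurable_nn_integral[OF m3]
    by simp_all
  ultimately show ?thesis
    unfolding forms by (simp add: nn_integral_add nn_integral_cmult)
qed

theorem mainTheorem4:
  shows "\<exists>C>0. \<forall>eps. polarization eps \<longrightarrow>
     (\<forall>m \<Lambda> \<psi>. \<Lambda> > 0 \<longrightarrow> sector_vector m \<psi> \<longrightarrow>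
        p_norm_sq m \<psi> < \<infinity> \<longrightarrow> Hf_form m \<psi> < \<infinity> \<longrightarrow>
        resolvent_form (Suc m) (sigmaEstar eps \<Lambda> m \<psi>)
          \<le> epsE eps \<Lambda> * norm_sq m \<psi>
             + ennreal (C * \<Lambda>) * (p_norm_sq m \<psi> + ennreal \<Lambda> * Hf_form m \<psi>))"
proof (intro exI[of _ "16 * unit_ball_vol 3 / pi\<^sup>2"] conjI allI impI)
  show "16 * unit_ball_vol 3 / pi\<^sup>2 > 0" by simp
  fix eps :: "nat \<Rightarrow> real^3 \<Rightarrow> real^3" and m :: nat and \<Lambda> :: real and \<psi> :: msector
  assume pol: "polarization eps" and L: "\<Lambda> > 0" and \<psi>: "sector_vector m \<psi>"
  have "resolvent_form (Suc m) (sigmaEstar eps \<Lambda> m \<psi>)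
      \<le> (\<integral>\<^sup>+\<eta>. (\<integral>\<^sup>+K. (\<integral>\<^sup>+y. emission_density \<Lambda> m \<psi> (\<eta> - fst y) y K \<partial>photon_measure) \<partial>photons m) \<partial>lborel)"
    by (rule resolvent_form_sigmaEstar_le[OF pol \<psi>])
  also have "\<dots> \<le> (\<integral>\<^sup>+\<eta>. (\<integral>\<^sup>+K. epsE eps \<Lambda> * ennreal (spin_norm_sq \<psi> \<eta> K)
       + ennreal (16 * unit_ball_vol 3 / pi\<^sup>2 * \<Lambda>)
         * (ennreal ((norm \<eta>)\<^sup>2 * spin_norm_sq \<psi> \<eta> K)
            + ennreal \<Lambda> * ennreal (photon_energy m K * spin_norm_sq \<psi> \<eta> K)) \<partial>photons m) \<partial>lborel)"
    by (intro nn_integral_mono nn_integral_emission_density_le[OF pol L])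
  also have "\<dots> = epsE eps \<Lambda> * norm_sq m \<psi>
      + ennreal (16 * unit_ball_vol 3 / pi\<^sup>2 * \<Lambda>) * (p_norm_sq m \<psi> + ennreal \<Lambda> * Hf_form m \<psi>)"
    by (rule nn_integral_sector_forms[OF \<psi>])
  finally show "resolvent_form (Suc m) (sigmaEstar eps \<Lambda> m \<psi>)
      \<le> epsE eps \<Lambda> * norm_sq m \<psi>
         + ennreal (16 * unit_ball_vol 3 / pi\<^sup>2 * \<Lambda>) * (p_norm_sq m \<psi> + ennreal \<Lambda> * Hf_form m \<psi>)" .
qed

end
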